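(* Let $\mathbf{k}$ be a commutative ring, $n\ge0$, and $w,u\in S_n$. Set $\beta:=\operatorname{cLRM}'(w)$ and $\gamma:=\operatorname{cLRM}'(u)$. Then: (a) $[\underline{w}](\mathbf{V}_\beta\mathbf{B}_\beta w)=1$. (b) If $u\neq w$, then $[\underline{w}](\mathbf{V}_\beta\mathbf{B}_\gamma u)=0$ unless $\widetilde{\beta}\prec_\pi\widetilde{\gamma}$.
   Context: $S_n$ is the symmetric group on $[n]$, with product $(uw)(i)=u(w(i))$; $\operatorname{Des}(u)=\{i\in[n-1]:u(i)>u(i+1)\}$; for $I\subseteq[n-1]$, $\mathbf{B}_I=\sum_{u\in S_n,\ \operatorname{Des}(u)\subseteq I}u\in\mathbf{k}[S_n]$. For a composition $\alpha=(\alpha_1,\dots,\alpha_p)$ of $n$, $\operatorname{Set}(\alpha)=\{\alpha_1,\alpha_1+\alpha_2,\dots,\alpha_1+\cdots+\alpha_{p-1}\}$, $\mathbf{B}_\alpha:=\mathbf{B}_{\operatorname{Set}(\alpha)}$, $\alpha_{\le i}=\alpha_1+\cdots+\alpha_i$, and $\operatorname{Set}(\alpha)_i=\{\alpha_{\le i-1}+1,\dots,\alpha_{\le i}\}$; $\operatorname{Comp}$ is the inverse bijection of $\operatorname{Set}$ from subsets of $[n-1]$ to compositions of $n$. $\operatorname{LRM}(w)=\{i\in[n]: w(k)>i\text{ for all }k<w^{-1}(i)\}$, $\operatorname{LRM}'(w)=\{\ell-1:\ell\in\operatorname{LRM}(w),\ \ell>1\}$, $\operatorname{cLRM}'(w)=\operatorname{Comp}(\operatorname{LRM}'(w))$.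 $\widetilde\alpha$ is the partition obtained by sorting the parts of $\alpha$ weakly decreasingly. For partitions $\lambda=(\lambda_1,\dots,\lambda_k)$, $\mu=(\mu_1,\dots,\mu_l)$ of $n$, $\lambda\preceq_\pi\mu$ means there is $f:[k]\to[l]$ with $\mu_j=\sum_{i\in f^{-1}(j)}\lambda_i$ for all $j$; $\lambda\prec_\pi\mu$ means $\lambda\preceq_\pi\mu$ and $\lambda\neq\mu$. $F_n$ is the free associative $\mathbf{k}$-algebra on letters $\underline1,\dots,\underline n$ and $F_{n,n}$ its span of words of length $n$; $S_n$ acts on $F_{n,n}$ from the right by $(\underline{w_1}\cdots\underline{w_n})\cdot\sigma=\underline{w_{\sigma(1)}}\cdots\underline{w_{\sigma(n)}}$, extended to a right $\mathbf{k}[S_n]$-action. For $\sigma\in S_n$, $\underline{\sigma}:=\underline{\sigma(1)}\cdots\underline{\sigma(n)}$. For $a\in F_n$ and a word $\mathfrak w$, $[\mathfrak w](a)$ is the coefficient of $\mathfrak w$ in $a$. $[a,b]=ab-ba$; for nonempty $S\subseteq[n]$ with elements $s_1<\cdots<s_k$, $V^S=[[\cdots[\underline{s_1},\underline{s_2}],\dots],\underline{s_k}]$; $\mathbf{V}_\alpha=V^{\operatorname{Set}(\alpha)_1}\cdots V^{\operatorname{Set}(\alpha)_p}$. Expressions like $\mathbf{V}_\beta\mathbf{B}_\gamma u$ mean the right action of $\mathbf{B}_\gamma u\in\mathbf{k}[S_n]$ on $\mathbf{V}_\beta$. *)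

theory Defs
  imports "HOL-Combinatorics.Permutations"
begin

text \<open>Permutations of [n] are functions nat => nat with  w permutes {1..n}.
  Product (uw)(i) = u(w(i)) is composition  u o w.\<close>

definition perms :: "nat \<Rightarrow> (nat \<Rightarrow> nat) set" where
  "perms n = {w. w permutes {1..n}}"

definition Des :: "nat \<Rightarrow> (nat \<Rightarrow> nat) \<Rightarrow> nat set" where
  "Des n u = {i \<in> {1..n-1}. u i > u (Suc i)}"

definition LRM :: "nat \<Rightarrow> (nat \<Rightarrow> nat) \<Rightarrow> nat set" where
  "LRM n w = {i \<in> {1..n}. \<forall>k. 1 \<le> k \<and> k < inv w i \<longrightarrow> w k > i}"

definition LRM' :: "nat \<Rightarrow> (nat \<Rightarrow> nat) \<Rightarrow> nat set" where
  "LRM' n w = {l - 1 | l. l \<in> LRM n w \<and> l > 1}"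

text \<open>A composition of n is a list of positive naturals summing to n.\<close>

definition psum :: "nat list \<Rightarrow> nat \<Rightarrow> nat" where
  "psum \<alpha> i = sum_list (take i \<alpha>)"

definition SetC :: "nat list \<Rightarrow> nat set" where
  "SetC \<alpha> = {psum \<alpha> i | i. 1 \<le> i \<and> i < length \<alpha>}"

definition block :: "nat list \<Rightarrow> nat \<Rightarrow> nat set" where
  "block \<alpha> i = {psum \<alpha> (i - 1) + 1 .. psum \<alpha> i}"  \<comment> \<open>Set(alpha)_i, 1-indexed\<close>

text \<open>Comp: inverse of SetC, from subsets of [n-1] to compositions of n.\<close>
definition Comp :: "nat \<Rightarrow> nat set \<Rightarrow> nat list" where
  "Comp n I = (if n = 0 then [] else
     (let s = [0] @ sorted_list_of_set I @ [n]
      in map (\<lambda>i. s ! Suc i - s ! i) [0..<length s - 1]))"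

definition cLRM' :: "nat \<Rightarrow> (nat \<Rightarrow> nat) \<Rightarrow> nat list" where
  "cLRM' n w = Comp n (LRM' n w)"

definition sortdec :: "nat list \<Rightarrow> nat list" where
  "sortdec \<alpha> = rev (sort \<alpha>)"

definition pi_le :: "nat list \<Rightarrow> nat list \<Rightarrow> bool" where
  "pi_le lam mu = (\<exists>f :: nat \<Rightarrow> nat. (\<forall>i < length lam. f i < length mu) \<and>
      (\<forall>j < length mu. mu ! j = (\<Sum>i \<in> {i. i < length lam \<and> f i = j}. lam ! i)))"

definition pi_less :: "nat list \<Rightarrow> nat list \<Rightarrow> bool" where
  "pi_less lam mu = (pi_le lam mu \<and> lam \<noteq> mu)"

text \<open>An element of the free algebra F_n is represented by its coefficient function on
  words (lists of letters). [w](a) is just  a w.\<close>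

type_synonym 'k ncpoly = "nat list \<Rightarrow> 'k"

definition nc_one :: "'k::comm_ring_1 ncpoly" where
  "nc_one = (\<lambda>x. if x = [] then 1 else 0)"

definition letter :: "nat \<Rightarrow> 'k::comm_ring_1 ncpoly" where
  "letter i = (\<lambda>x. if x = [i] then 1 else 0)"

definition nc_mult :: "'k::comm_ring_1 ncpoly \<Rightarrow> 'k ncpoly \<Rightarrow> 'k ncpoly" where
  "nc_mult a b = (\<lambda>x. \<Sum>i \<le> length x. a (take i x) * b (drop i x))"

definition bracket :: "'k::comm_ring_1 ncpoly \<Rightarrow> 'k ncpoly \<Rightarrow> 'k ncpoly" where
  "bracket a b = (\<lambda>x. nc_mult a b x - nc_mult b a x)"

definition VS :: "nat set \<Rightarrow> 'k::comm_ring_1 ncpoly" where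
  "VS S = (let xs = sorted_list_of_set S in
     foldl (\<lambda>acc s. bracket acc (letter s)) (letter (hd xs)) (tl xs))"

definition Vcomp :: "nat list \<Rightarrow> 'k::comm_ring_1 ncpoly" where
  "Vcomp \<alpha> = foldr nc_mult (map (\<lambda>i. VS (block \<alpha> i)) [1..<Suc (length \<alpha>)]) nc_one"

text \<open>Right action of S_n on words of length n:
  (w_1...w_n).sigma = w_{sigma(1)}...w_{sigma(n)}.\<close>
definition word_act :: "nat list \<Rightarrow> (nat \<Rightarrow> nat) \<Rightarrow> nat list" where
  "word_act x \<sigma> = map (\<lambda>i. x ! (\<sigma> (Suc i) - 1)) [0..<length x]"

text \<open>Coefficients of a.sigma for a in F_{n,n}: the coefficient of word x (of length n)
  in a.sigma is the coefficient of x.sigma^{-1} in a.\<close>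
definition act :: "nat \<Rightarrow> 'k::comm_ring_1 ncpoly \<Rightarrow> (nat \<Rightarrow> nat) \<Rightarrow> 'k ncpoly" where
  "act n a \<sigma> = (\<lambda>x. if length x = n then a (word_act x (inv \<sigma>)) else 0)"

text \<open>Right action of B_I u = sum over v in S_n with Des(v) subset I of v u.\<close>
definition actBu :: "nat \<Rightarrow> 'k::comm_ring_1 ncpoly \<Rightarrow> nat set \<Rightarrow> (nat \<Rightarrow> nat) \<Rightarrow> 'k ncpoly" where
  "actBu n a I u = (\<lambda>x. \<Sum>v \<in> {v \<in> perms n. Des n v \<subseteq> I}. act n a (v \<circ> u) x)"

definition underline :: "nat \<Rightarrow> (nat \<Rightarrow> nat) \<Rightarrow> nat list" where
  "underline n \<sigma> = map \<sigma> [1..<Suc n]"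

end

(* Expanding each left-normed commutator V^S over the subsets L of the non-minimal letters of S
   writes V_beta as a signed sum of words W(beta, L): inside each block, the letters of L in
   decreasing order followed by the other letters in increasing order.  Hence the coefficient of w
   in V_beta B_gamma u is a signed count of the sets L for which t^-1 w u^-1 has all its descents in
   Set(gamma), where t is the permutation spelled by W(beta, L); call such L admissible.

   For gamma = beta and u = w only L = {} is admissible.  Otherwise, if some block of beta meets two
   blocks of gamma (transported by u w^-1), toggling the least letter of the block that lies in
   another gamma-block than the block minimum is a sign-reversing involution on admissible sets.  If not, every block of gamma is a
   union of blocks of beta, so sort(beta) <=_pi sort(gamma), and if the two partitions are equal the
   blocks correspond exactly.  Since every block of cLRM' starts with a left-to-right minimum sitting
   at its leftmost position, admissibility then forces L = {} and u = w. *)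

theory Submission
  imports Defs
begin

section \<open>Coefficients in the free algebra\<close>

lemma take_eq_singleton_iff:
  "i \<le> length y \<Longrightarrow> take i y = [s] \<longleftrightarrow> y \<noteq> [] \<and> i = 1 \<and> hd y = s"
  by (cases y; cases i) auto

lemma drop_eq_singleton_iff:
  "drop i y = [s] \<longleftrightarrow> y \<noteq> [] \<and> i = length y - 1 \<and> last y = s"
proof -
  have "drop i y = [s] \<longleftrightarrow> take (length y - i) (rev y) = [s]"
    by (simp add: rev_drop[symmetric] rev_swap)
  also have "\<dots> \<longleftrightarrow> y \<noteq> [] \<and> i = length y - 1 \<and> last y = s"
    by (subst take_eq_singleton_iff) (auto simp: hd_rev simp flip: length_greater_0_conv)
  finally show ?thesis .
qed

lemma nc_mult_letter_left:
  "nc_mult (letter s) a y = (if y \<noteq> [] \<and> hd y = s then a (tl y) else 0)"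
proof -
  have "nc_mult (letter s) a y = (\<Sum>i\<le>length y. if i = 1 then (if y \<noteq> [] \<and> hd y = s then a (drop i y) else 0) else 0)"
    unfolding nc_mult_def letter_def by (intro sum.cong) (auto simp: take_eq_singleton_iff)
  also have "\<dots> = (if 1 \<in> {..length y} then (if y \<noteq> [] \<and> hd y = s then a (drop 1 y) else 0) else 0)"
    by (rule sum.delta) simp
  finally show ?thesis
    by (cases y) auto
qed

lemma nc_mult_letter_right:
  "nc_mult a (letter s) y = (if y \<noteq> [] \<and> last y = s then a (butlast y) else 0)"
proof -
  have "nc_mult a (letter s) y = (\<Sum>i\<le>length y. if i = length y - 1 then (if y \<noteq> [] \<and> last y = s then a (take i y) else 0) else 0)"
    unfolding nc_mult_def letter_def by (intro sum.cong) (auto simp: drop_eq_singleton_iff)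
  then show ?thesis
    by (simp add: sum.delta butlast_conv_take)
qed

lemma bracket_letter:
  "bracket a (letter s) y =
     (if y \<noteq> [] \<and> last y = s then a (butlast y) else 0) - (if y \<noteq> [] \<and> hd y = s then a (tl y) else 0)"
  by (simp add: bracket_def nc_mult_letter_left nc_mult_letter_right)

lemma sum_Pow_insert:
  assumes "finite A" "x \<notin> A"
  shows "(\<Sum>L\<in>Pow (insert x A). f L) = (\<Sum>L\<in>Pow A. f L + f (insert x L))"
proof -
  have "inj_on (insert x) (Pow A)"
    using assms(2) by (intro inj_onI) (metis PowD insert_ident subsetD)
  moreover have "Pow A \<inter> insert x ` Pow A = {}"
    using assms(2) by auto
  ultimately show ?thesis
    unfolding Pow_insert using assms(1) by (simp add: sum.union_disjoint sum.reindex sum.distrib)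
qed

definition bracket_word :: "nat list \<Rightarrow> nat set \<Rightarrow> nat list" where
  "bracket_word xs L = rev (filter (\<lambda>x. x \<in> L) xs) @ filter (\<lambda>x. x \<notin> L) xs"

lemma length_bracket_word [simp]: "length (bracket_word xs L) = length xs"
  by (simp add: bracket_word_def sum_length_filter_compl)

lemma set_bracket_word [simp]: "set (bracket_word xs L) = set xs"
  by (auto simp: bracket_word_def)

lemma bracket_word_snoc: "x \<notin> L \<Longrightarrow> bracket_word (xs @ [x]) L = bracket_word xs L @ [x]"
  by (simp add: bracket_word_def)

lemma bracket_word_snoc_insert:
  "x \<notin> set xs \<Longrightarrow> bracket_word (xs @ [x]) (insert x L) = x # bracket_word xs L"
proof -
  assume x: "x \<notin> set xs"
  have "filter (\<lambda>z. z \<in> insert x L) xs = filter (\<lambda>z. z \<in> L) xs"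
       "filter (\<lambda>z. z \<notin> insert x L) xs = filter (\<lambda>z. z \<notin> L) xs"
    using x by (auto intro: filter_cong)
  then show ?thesis
    by (simp add: bracket_word_def)
qed

lemma bracket_letter_signed_words:
  fixes xs :: "nat list"
  assumes x: "x \<notin> set xs" and "xs \<noteq> []"
  defines "P \<equiv> \<lambda>z. \<Sum>L\<in>Pow (set (tl xs)). if z = bracket_word xs L then (-1) ^ card L else (0::'k::comm_ring_1)"
  shows "bracket P (letter x) y =
    (\<Sum>L\<in>Pow (set (tl (xs @ [x]))). if y = bracket_word (xs @ [x]) L then (-1) ^ card L else 0)"
proof -
  define A where "A = set (tl xs)"
  have xA: "x \<notin> A" "finite A"
    using x by (auto simp: A_def dest: list.set_sel(2)[OF \<open>xs \<noteq> []\<close>])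
  have card_insert: "card (insert x L) = Suc (card L)" if "L \<subseteq> A" for L
    using that xA by (meson card_insert_disjoint finite_subset subsetD)
  have "y = bracket_word (xs @ [x]) L \<longleftrightarrow> y \<noteq> [] \<and> last y = x \<and> butlast y = bracket_word xs L"
    if "L \<subseteq> A" for L
    using that xA bracket_word_snoc[of x L xs] by (metis snoc_eq_iff_butlast subsetD)
  then have "(\<Sum>L\<in>Pow A. if y = bracket_word (xs @ [x]) L then (-1) ^ card L else 0) =
      (\<Sum>L\<in>Pow A. if y \<noteq> [] \<and> last y = x then
         (if butlast y = bracket_word xs L then (-1) ^ card L else 0) else (0::'k))"
    by (intro sum.cong refl) auto
  then have last_part: "(if y \<noteq> [] \<and> last y = x then P (butlast y) else 0) =
      (\<Sum>L\<in>Pow A. if y = bracket_word (xs @ [x]) L then (-1) ^ card L else 0)"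
    by (simp add: P_def A_def)
  have "(\<Sum>L\<in>Pow A. if y = bracket_word (xs @ [x]) (insert x L) then (-1) ^ card (insert x L) else 0) =
      (\<Sum>L\<in>Pow A. if y \<noteq> [] \<and> hd y = x then
         - (if tl y = bracket_word xs L then (-1) ^ card L else 0) else (0::'k))"
    using x by (intro sum.cong refl) (cases y; auto simp: bracket_word_snoc_insert card_insert)
  then have hd_part: "(if y \<noteq> [] \<and> hd y = x then P (tl y) else 0) =
      - (\<Sum>L\<in>Pow A. if y = bracket_word (xs @ [x]) (insert x L) then (-1) ^ card (insert x L) else 0)"
    by (simp add: P_def A_def sum_negf)
  have "bracket P (letter x) y = (\<Sum>L\<in>Pow A. (if y = bracket_word (xs @ [x]) L then (-1) ^ card L else 0)
      + (if y = bracket_word (xs @ [x]) (insert x L) then (-1) ^ card (insert x L) else 0))"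
    by (simp add: bracket_letter last_part hd_part sum.distrib)
  also have "\<dots> = (\<Sum>L\<in>Pow (set (tl (xs @ [x]))). if y = bracket_word (xs @ [x]) L then (-1) ^ card L else 0)"
    using \<open>xs \<noteq> []\<close> xA by (simp add: A_def sum_Pow_insert)
  finally show ?thesis .
qed

lemma foldl_bracket_letter_coeff:
  assumes "sorted_wrt (<) xs" "xs \<noteq> []"
  shows "foldl (\<lambda>acc s. bracket acc (letter s)) (letter (hd xs)) (tl xs) y =
    (\<Sum>L\<in>Pow (set (tl xs)). if y = bracket_word xs L then (-1) ^ card L else (0::'k::comm_ring_1))"
  using assms
proof (induction xs arbitrary: y rule: rev_induct)
  case (snoc x xs)
  show ?case
  proof (cases "xs = []")
    case True
    then show ?thesis
      by (simp add: letter_def bracket_word_def)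
  next
    case False
    have "x \<notin> set xs" "sorted_wrt (<) xs"
      using snoc.prems by (auto simp: sorted_wrt_append)
    then have "foldl (\<lambda>acc s. bracket acc (letter s)) (letter (hd xs)) (tl xs) =
        (\<lambda>z. \<Sum>L\<in>Pow (set (tl xs)). if z = bracket_word xs L then (-1) ^ card L else (0::'k))"
      using snoc.IH False by blast
    then show ?thesis
      using False bracket_letter_signed_words[OF \<open>x \<notin> set xs\<close> False] by simp
  qed
qed simp

definition block_word :: "nat set \<Rightarrow> nat set \<Rightarrow> nat list" where
  "block_word S L = bracket_word (sorted_list_of_set S) L"

lemma length_block_word [simp]: "finite S \<Longrightarrow> length (block_word S L) = card S"
  by (simp add: block_word_def)

lemma set_block_word [simp]: "finite S \<Longrightarrow> set (block_word S L) = S"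
  by (simp add: block_word_def)

lemma block_word_cong:
  "finite S \<Longrightarrow> (\<And>x. x \<in> S \<Longrightarrow> x \<in> L \<longleftrightarrow> x \<in> L') \<Longrightarrow> block_word S L = block_word S L'"
  unfolding block_word_def bracket_word_def by (metis (mono_tags) filter_cong sorted_list_of_set(1))

lemma VS_coeff:
  assumes "finite S" "S \<noteq> {}"
  shows "(VS S :: 'k::comm_ring_1 ncpoly) y =
    (\<Sum>L\<in>Pow (S - {Min S}). if y = block_word S L then (-1) ^ card L else 0)"
proof -
  have "hd (sorted_list_of_set S) = Min S" "set (tl (sorted_list_of_set S)) = S - {Min S}"
    using sorted_list_of_set_nonempty[OF assms] assms(1) by simp_all
  then show ?thesis
    using foldl_bracket_letter_coeff[OF strict_sorted_list_of_set, of S y] assms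
    by (simp add: VS_def block_word_def)
qed

lemma VS_eq_0:
  "finite S \<Longrightarrow> S \<noteq> {} \<Longrightarrow> length y \<noteq> card S \<Longrightarrow> (VS S :: 'k::comm_ring_1 ncpoly) y = 0"
  by (auto simp: VS_coeff intro!: sum.neutral split: if_split_asm)

lemma nc_mult_homogeneous:
  assumes "\<And>x. length x \<noteq> d \<Longrightarrow> a x = 0"
  shows "nc_mult a b y = (if d \<le> length y then a (take d y) * b (drop d y) else 0)"
proof -
  have "nc_mult a b y = (\<Sum>i\<le>length y. if i = d then a (take i y) * b (drop i y) else 0)"
    unfolding nc_mult_def using assms by (intro sum.cong) auto
  then show ?thesis
    by (simp add: sum.delta)
qed

lemma foldr_nc_mult_homogeneous:
  assumes "length ds = length Fs" "\<And>i x. i < length Fs \<Longrightarrow> length x \<noteq> ds ! i \<Longrightarrow> (Fs ! i) x = 0"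
  shows "foldr nc_mult Fs nc_one y = (if length y = sum_list ds then
    (\<Prod>i<length Fs. (Fs ! i) (take (ds ! i) (drop (psum ds i) y))) else (0::'k::comm_ring_1))"
  using assms
proof (induction Fs arbitrary: ds y)
  case Nil
  then show ?case by (simp add: nc_one_def)
next
  case (Cons F Fs)
  obtain d ds' where ds: "ds = d # ds'"
    using Cons.prems(1) by (cases ds) auto
  have F: "F x = 0" if "length x \<noteq> d" for x
    using Cons.prems(2)[of 0] that by (simp add: ds)
  have Fs: "(Fs ! i) x = 0" if "i < length Fs" "length x \<noteq> ds' ! i" for i x
    using Cons.prems(2)[of "Suc i" x] that by (simp add: ds)
  have IH: "foldr nc_mult Fs nc_one z = (if length z = sum_list ds' then
      (\<Prod>i<length Fs. (Fs ! i) (take (ds' ! i) (drop (psum ds' i) z))) else 0)" for z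
    using Cons.IH[of ds' z, OF _ Fs] Cons.prems(1) by (simp add: ds)
  have drop_psum: "drop (psum ds' i) (drop d y) = drop (psum ds (Suc i)) y" for i
    by (simp add: ds psum_def add.commute)
  have "(\<Prod>i<length (F # Fs). ((F # Fs) ! i) (take (ds ! i) (drop (psum ds i) y))) =
      F (take d y) * (\<Prod>i<length Fs. (Fs ! i) (take (ds' ! i) (drop (psum ds' i) (drop d y))))"
    by (simp only: length_Cons prod.lessThan_Suc_shift drop_psum) (simp add: ds psum_def)
  moreover have "d \<le> length y \<and> length (drop d y) = sum_list ds' \<longleftrightarrow> length y = sum_list ds"
    by (auto simp: ds)
  ultimately show ?case
    by (auto simp: nc_mult_homogeneous[OF F] IH)
qed

lemma concat_eq_iff_chunks:
  "y = concat ws \<longleftrightarrow> length y = sum_list (map length ws) \<and>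
    (\<forall>i<length ws. take (length (ws ! i)) (drop (psum (map length ws) i) y) = ws ! i)"
proof (induction ws arbitrary: y)
  case (Cons w ws)
  have drop: "drop (psum (map length ws) i) (drop (length w) y) = drop (psum (map length (w # ws)) (Suc i)) y" for i
    by (simp add: psum_def add.commute)
  have "y = concat (w # ws) \<longleftrightarrow> take (length w) y = w \<and> drop (length w) y = concat ws"
    using append_eq_conv_conj[of w "concat ws" y] by auto
  also have "\<dots> \<longleftrightarrow> take (length w) y = w \<and> length (drop (length w) y) = sum_list (map length ws) \<and>
    (\<forall>i<length ws. take (length (ws ! i)) (drop (psum (map length (w # ws)) (Suc i)) y) = ws ! i)"
    by (simp only: Cons.IH drop)
  also have "\<dots> \<longleftrightarrow> length y = sum_list (map length (w # ws)) \<and>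
    (\<forall>i<length (w # ws). take (length ((w # ws) ! i)) (drop (psum (map length (w # ws)) i) y) = (w # ws) ! i)"
    unfolding length_Cons All_less_Suc2 by (auto simp: psum_def dest: arg_cong[where f = length])
  finally show ?case .
qed (simp add: psum_def)

lemma prod_sum_Pow_disjoint:
  fixes h :: "'i \<Rightarrow> 'a set \<Rightarrow> 'k::comm_semiring_1"
  assumes "finite I" "\<And>i. i \<in> I \<Longrightarrow> finite (N i)" "disjoint_family_on N I"
  shows "(\<Prod>i\<in>I. \<Sum>L\<in>Pow (N i). h i L) = (\<Sum>L\<in>Pow (\<Union>i\<in>I. N i). \<Prod>i\<in>I. h i (L \<inter> N i))"
  using assms
proof (induction I rule: finite_induct)
  case (insert a I)
  define M where "M = (\<Union>i\<in>I. N i)"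
  have disj: "N a \<inter> N i = {}" if "i \<in> I" for i
    using insert.prems(2) insert.hyps(2) that unfolding disjoint_family_on_def by fastforce
  then have "N a \<inter> M = {}"
    by (auto simp: M_def)
  then have bij: "bij_betw (\<lambda>(A, B). A \<union> B) (Pow (N a) \<times> Pow M) (Pow (N a \<union> M))"
    by (intro bij_betw_byWitness[where f' = "\<lambda>L. (L \<inter> N a, L \<inter> M)"]) auto
  have IH: "(\<Prod>i\<in>I. \<Sum>L\<in>Pow (N i). h i L) = (\<Sum>L\<in>Pow M. \<Prod>i\<in>I. h i (L \<inter> N i))"
    using insert by (auto simp: M_def disjoint_family_on_def)
  have "(\<Prod>i\<in>insert a I. \<Sum>L\<in>Pow (N i). h i L) =
      (\<Sum>(A, B)\<in>Pow (N a) \<times> Pow M. h a A * (\<Prod>i\<in>I. h i (B \<inter> N i)))"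
    using insert.hyps by (simp add: IH sum_product sum.cartesian_product)
  also have "\<dots> = (\<Sum>(A, B)\<in>Pow (N a) \<times> Pow M. h a ((A \<union> B) \<inter> N a) * (\<Prod>i\<in>I. h i ((A \<union> B) \<inter> N i)))"
  proof (intro sum.cong refl, clarify)
    fix A B assume "A \<subseteq> N a" "B \<subseteq> M"
    then have "(A \<union> B) \<inter> N a = A" "\<And>i. i \<in> I \<Longrightarrow> (A \<union> B) \<inter> N i = B \<inter> N i"
      using disj \<open>N a \<inter> M = {}\<close> by auto
    then show "h a A * (\<Prod>i\<in>I. h i (B \<inter> N i)) = h a ((A \<union> B) \<inter> N a) * (\<Prod>i\<in>I. h i ((A \<union> B) \<inter> N i))"
      by simp
  qed
  also have "\<dots> = (\<Sum>L\<in>Pow (N a \<union> M). h a (L \<inter> N a) * (\<Prod>i\<in>I. h i (L \<inter> N i)))"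
    using sum.reindex_bij_betw[OF bij, of "\<lambda>L. h a (L \<inter> N a) * (\<Prod>i\<in>I. h i (L \<inter> N i))"]
    by (simp add: case_prod_unfold)
  finally show ?case
    using insert.hyps by (simp add: M_def)
qed simp

section \<open>Compositions and their parts\<close>

definition block_index :: "nat set \<Rightarrow> nat \<Rightarrow> nat" where
  "block_index I x = card {i \<in> I. i < x}"

text \<open>Parts are indexed from 0: \<open>part \<alpha> i\<close> is the block \<open>Set(\<alpha>)_(i+1)\<close>, i.e. the set of letters
  \<open>x\<close> with \<open>block_index (SetC \<alpha>) x = i\<close>.\<close>

definition part :: "nat list \<Rightarrow> nat \<Rightarrow> nat set" where
  "part \<alpha> i = block \<alpha> (Suc i)"

definition part_tails :: "nat list \<Rightarrow> nat set" where
  "part_tails \<alpha> = (\<Union>i<length \<alpha>. part \<alpha> i - {Min (part \<alpha> i)})"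

definition comp_word :: "nat list \<Rightarrow> nat set \<Rightarrow> nat list" where
  "comp_word \<alpha> L = concat (map (\<lambda>i. block_word (part \<alpha> i) L) [0..<length \<alpha>])"

lemma block_index_mono: "x \<le> y \<Longrightarrow> block_index I x \<le> block_index I y"
  unfolding block_index_def by (rule card_mono) auto

lemma block_index_Suc: "block_index I (Suc x) = block_index I x + (if x \<in> I then 1 else 0)"
proof -
  have "{i \<in> I. i < Suc x} = {i \<in> I. i < x} \<union> ({x} \<inter> I)"
    by auto
  then show ?thesis
    unfolding block_index_def by (auto simp: card_insert_if)
qed

lemma psum_Suc: "i < length \<alpha> \<Longrightarrow> psum \<alpha> (Suc i) = psum \<alpha> i + \<alpha> ! i"
  by (simp add: psum_def take_Suc_conv_app_nth)

lemma psum_0 [simp]: "psum \<alpha> 0 = 0"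
  by (simp add: psum_def)

lemma psum_length [simp]: "psum \<alpha> (length \<alpha>) = sum_list \<alpha>"
  by (simp add: psum_def)

lemma psum_mono: "i \<le> j \<Longrightarrow> psum \<alpha> i \<le> psum \<alpha> j"
  by (auto simp: psum_def le_iff_add take_add)

lemma psum_strict_mono:
  assumes "0 \<notin> set \<alpha>" "i < j" "j \<le> length \<alpha>"
  shows "psum \<alpha> i < psum \<alpha> j"
proof -
  have "\<alpha> ! (j - 1) \<in> set \<alpha>"
    using assms by (intro nth_mem) simp
  then have "0 < \<alpha> ! (j - 1)"
    using assms(1) by (metis gr0I)
  moreover have "psum \<alpha> i \<le> psum \<alpha> (j - 1)"
    using assms by (intro psum_mono) simp
  ultimately show ?thesis
    using psum_Suc[of "j - 1" \<alpha>] assms by simp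
qed

lemma part_eq: "part \<alpha> i = {psum \<alpha> i + 1 .. psum \<alpha> (Suc i)}"
  by (simp add: part_def block_def)

lemma finite_part [simp]: "finite (part \<alpha> i)"
  by (simp add: part_eq)

lemma card_part: "i < length \<alpha> \<Longrightarrow> card (part \<alpha> i) = \<alpha> ! i"
  by (simp add: part_eq psum_Suc)

lemma part_nonempty: "0 \<notin> set \<alpha> \<Longrightarrow> i < length \<alpha> \<Longrightarrow> part \<alpha> i \<noteq> {}"
  using card_part[of i \<alpha>] nth_mem[of i \<alpha>] by force

lemma Min_part: "0 \<notin> set \<alpha> \<Longrightarrow> i < length \<alpha> \<Longrightarrow> Min (part \<alpha> i) = psum \<alpha> i + 1"
  using part_nonempty[of \<alpha> i] by (intro Min_eqI) (auto simp: part_eq)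

lemma part_subset: "i < length \<alpha> \<Longrightarrow> part \<alpha> i \<subseteq> {1..sum_list \<alpha>}"
  using psum_mono[of "Suc i" "length \<alpha>" \<alpha>] by (auto simp: part_eq)

lemma block_index_SetC_part:
  assumes pos: "0 \<notin> set \<alpha>" and i: "i < length \<alpha>" and x: "x \<in> part \<alpha> i"
  shows "block_index (SetC \<alpha>) x = i"
proof -
  have x_bounds: "psum \<alpha> i < x" "x \<le> psum \<alpha> (Suc i)"
    using x by (auto simp: part_eq)
  have "strict_mono_on {1..i} (psum \<alpha>)"
    using psum_strict_mono[OF pos] i by (intro strict_mono_onI) simp
  then have "inj_on (psum \<alpha>) {1..i}"
    by (rule strict_mono_on_imp_inj_on)
  moreover have "{j \<in> SetC \<alpha>. j < x} = psum \<alpha> ` {1..i}"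
  proof (intro equalityI subsetI)
    fix j assume "j \<in> {j \<in> SetC \<alpha>. j < x}"
    then obtain k where k: "1 \<le> k" "k < length \<alpha>" "j = psum \<alpha> k" "psum \<alpha> k < x"
      by (auto simp: SetC_def)
    have "k \<le> i"
    proof (rule ccontr)
      assume "\<not> k \<le> i"
      then have "psum \<alpha> (Suc i) \<le> psum \<alpha> k"
        by (intro psum_mono) simp
      with k x_bounds show False
        by simp
    qed
    then show "j \<in> psum \<alpha> ` {1..i}"
      using k by auto
  next
    fix j assume "j \<in> psum \<alpha> ` {1..i}"
    then show "j \<in> {j \<in> SetC \<alpha>. j < x}"
      using i x_bounds psum_mono[of _ i \<alpha>] by (force simp: SetC_def)
  qed
  ultimately show ?thesis
    by (simp add: block_index_def card_image)
qed

lemma part_exists: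
  assumes "x \<in> {1..sum_list \<alpha>}"
  shows "\<exists>i<length \<alpha>. x \<in> part \<alpha> i"
proof -
  define j where "j = (LEAST j. x \<le> psum \<alpha> j)"
  have "x \<le> psum \<alpha> (length \<alpha>)"
    using assms by simp
  then have "x \<le> psum \<alpha> j" "j \<le> length \<alpha>"
    unfolding j_def by (rule LeastI, rule Least_le)
  moreover have "j \<noteq> 0"
    using \<open>x \<le> psum \<alpha> j\<close> assms by (cases j) auto
  moreover have "\<not> x \<le> psum \<alpha> (j - 1)"
    using \<open>j \<noteq> 0\<close> unfolding j_def by (intro not_less_Least) simp
  ultimately show ?thesis
    by (intro exI[of _ "j - 1"]) (auto simp: part_eq)
qed

lemma mem_part_iff:
  assumes pos: "0 \<notin> set \<alpha>" and i: "i < length \<alpha>"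
  shows "x \<in> part \<alpha> i \<longleftrightarrow> x \<in> {1..sum_list \<alpha>} \<and> block_index (SetC \<alpha>) x = i"
proof
  assume "x \<in> part \<alpha> i"
  then show "x \<in> {1..sum_list \<alpha>} \<and> block_index (SetC \<alpha>) x = i"
    using part_subset[OF i] block_index_SetC_part[OF pos i] by auto
next
  assume x: "x \<in> {1..sum_list \<alpha>} \<and> block_index (SetC \<alpha>) x = i"
  then obtain j where "j < length \<alpha>" "x \<in> part \<alpha> j"
    using part_exists by blast
  with x show "x \<in> part \<alpha> i"
    using block_index_SetC_part[OF pos] by auto
qed

lemma block_index_SetC_less:
  assumes "0 \<notin> set \<alpha>" "x \<in> {1..sum_list \<alpha>}"
  shows "block_index (SetC \<alpha>) x < length \<alpha>"
proof -
  obtain i where "i < length \<alpha>" "x \<in> part \<alpha> i"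
    using part_exists[OF assms(2)] by blast
  then show ?thesis
    using block_index_SetC_part[OF assms(1)] by auto
qed

lemma parts_disjoint:
  assumes "0 \<notin> set \<alpha>" "i < length \<alpha>" "j < length \<alpha>" "i \<noteq> j"
  shows "part \<alpha> i \<inter> part \<alpha> j = {}"
  using block_index_SetC_part[OF assms(1)] assms(2-4) by (metis disjoint_iff)

lemma UN_parts: "(\<Union>i<length \<alpha>. part \<alpha> i) = {1..sum_list \<alpha>}"
  using part_subset part_exists by (auto simp: lessThan_iff) blast

lemma mem_part_tails_iff:
  assumes pos: "0 \<notin> set \<alpha>"
  shows "x \<in> part_tails \<alpha> \<longleftrightarrow> x \<in> {1..sum_list \<alpha>} \<and>
    (\<exists>y\<in>{1..sum_list \<alpha>}. y < x \<and> block_index (SetC \<alpha>) y = block_index (SetC \<alpha>) x)"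
    (is "_ \<longleftrightarrow> ?rhs")
proof -
  have tail: "x \<in> part \<alpha> i - {Min (part \<alpha> i)} \<longleftrightarrow> x \<in> part \<alpha> i \<and> (\<exists>y\<in>part \<alpha> i. y < x)"
    if "i < length \<alpha>" for i
    using Min_part[OF pos that] by (auto simp: part_eq intro!: bexI[of _ "psum \<alpha> i + 1"])
  show ?thesis
  proof
    assume "x \<in> part_tails \<alpha>"
    then obtain i y where i: "i < length \<alpha>" and "x \<in> part \<alpha> i" "y \<in> part \<alpha> i" "y < x"
      using tail by (auto simp: part_tails_def)
    then show ?rhs
      unfolding mem_part_iff[OF pos i] by auto
  next
    assume ?rhs
    then obtain y where x: "x \<in> {1..sum_list \<alpha>}" and y: "y \<in> {1..sum_list \<alpha>}" "y < x"
      and same: "block_index (SetC \<alpha>) y = block_index (SetC \<alpha>) x"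
      by blast
    define i where "i = block_index (SetC \<alpha>) x"
    have i: "i < length \<alpha>"
      using block_index_SetC_less[OF pos x] by (simp add: i_def)
    have "x \<in> part \<alpha> i" "y \<in> part \<alpha> i"
      unfolding mem_part_iff[OF pos i] using x y same by (simp_all add: i_def)
    then show "x \<in> part_tails \<alpha>"
      unfolding part_tails_def using tail[OF i] i y(2) by blast
  qed
qed

lemma Comp_composition:
  assumes I: "I \<subseteq> {1..n-1}"
  shows "0 \<notin> set (Comp n I) \<and> sum_list (Comp n I) = n \<and> SetC (Comp n I) = I"
proof (cases "n = 0")
  case True
  then show ?thesis
    using I by (simp add: Comp_def SetC_def)
next
  case False
  define s where "s = [0] @ sorted_list_of_set I @ [n]"
  define \<alpha> where "\<alpha> = map (\<lambda>i. s ! Suc i - s ! i) [0..<length s - 1]"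
  have fin: "finite I"
    using I finite_subset by blast
  have Comp: "Comp n I = \<alpha>"
    using False by (simp add: Comp_def \<alpha>_def s_def Let_def)
  have "sorted_wrt (<) s"
    using I False fin unfolding s_def sorted_wrt_append by fastforce
  then have s_less: "s ! i < s ! Suc i" if "i < length \<alpha>" for i
    using that by (simp add: \<alpha>_def sorted_wrt_iff_nth_less)
  have \<alpha>_nth: "\<alpha> ! i = s ! Suc i - s ! i" if "i < length \<alpha>" for i
    using that by (simp add: \<alpha>_def del: upt_Suc)
  have psum_\<alpha>: "psum \<alpha> i = s ! i" if "i \<le> length \<alpha>" for i
    using that
  proof (induction i)
    case (Suc i)
    then show ?case
      using psum_Suc[of i \<alpha>] \<alpha>_nth[of i] s_less[of i] by simp
  qed (simp add: s_def)
  have len: "length \<alpha> = Suc (card I)"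
    using fin by (simp add: \<alpha>_def s_def)
  have "s ! length \<alpha> = n"
    using len fin by (simp add: s_def nth_append)
  then have "sum_list \<alpha> = n"
    using psum_\<alpha>[of "length \<alpha>"] by simp
  moreover have "0 \<notin> set \<alpha>"
    using s_less \<alpha>_nth by (auto simp: in_set_conv_nth)
  moreover have "SetC \<alpha> = I"
  proof -
    let ?xs = "sorted_list_of_set I"
    have "SetC \<alpha> = psum \<alpha> ` {1..<length \<alpha>}"
      by (auto simp: SetC_def)
    also have "\<dots> = (\<lambda>i. s ! Suc i) ` {..<card I}"
      unfolding len atLeastLessThanSuc_atLeastAtMost image_Suc_lessThan[symmetric] image_image
      using len psum_\<alpha> by (intro image_cong) auto
    also have "\<dots> = (!) ?xs ` {0..<length ?xs}"
      using fin by (intro image_cong) (auto simp: s_def nth_append)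
    also have "\<dots> = I"
      using fin by (simp add: nth_image)
    finally show ?thesis .
  qed
  ultimately show ?thesis
    using Comp by simp
qed

lemma eq_comp_word_iff:
  "y = comp_word \<alpha> L \<longleftrightarrow> length y = sum_list \<alpha> \<and>
    (\<forall>i<length \<alpha>. take (\<alpha> ! i) (drop (psum \<alpha> i) y) = block_word (part \<alpha> i) L)"
proof -
  have "map length (map (\<lambda>i. block_word (part \<alpha> i) L) [0..<length \<alpha>]) = \<alpha>"
    by (rule nth_equalityI) (simp_all add: card_part)
  then show ?thesis
    unfolding comp_word_def concat_eq_iff_chunks by (auto simp: card_part)
qed

lemma Vcomp_coeff:
  assumes pos: "0 \<notin> set \<alpha>"
  shows "(Vcomp \<alpha> :: 'k::comm_ring_1 ncpoly) y =
    (\<Sum>L\<in>Pow (part_tails \<alpha>). if y = comp_word \<alpha> L then (-1) ^ card L else 0)"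
proof -
  define k where "k = length \<alpha>"
  define T where "T i = part \<alpha> i - {Min (part \<alpha> i)}" for i
  define chunk where "chunk i = take (\<alpha> ! i) (drop (psum \<alpha> i) y)" for i
  have disj: "disjoint_family_on T {..<k}"
    using parts_disjoint[OF pos] by (auto simp: disjoint_family_on_def T_def k_def)
  have Vcomp: "(Vcomp \<alpha> :: 'k ncpoly) = foldr nc_mult (map (\<lambda>i. VS (part \<alpha> i)) [0..<k]) nc_one"
    by (simp add: Vcomp_def part_def k_def map_Suc_upt[symmetric] comp_def del: upt_Suc)
  have "(Vcomp \<alpha> :: 'k ncpoly) y = (if length y = sum_list \<alpha> then (\<Prod>i<k. VS (part \<alpha> i) (chunk i)) else 0)"
    unfolding Vcomp
    by (subst foldr_nc_mult_homogeneous[where ds = \<alpha>])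
      (auto simp: k_def chunk_def VS_eq_0 part_nonempty[OF pos] card_part)
  also have "(\<Prod>i<k. (VS (part \<alpha> i) :: 'k ncpoly) (chunk i)) =
      (\<Prod>i<k. \<Sum>L\<in>Pow (T i). if chunk i = block_word (part \<alpha> i) L then (-1) ^ card L else 0)"
    by (intro prod.cong refl) (simp add: VS_coeff part_nonempty[OF pos] T_def k_def)
  also have "\<dots> = (\<Sum>L\<in>Pow (part_tails \<alpha>). \<Prod>i<k.
      if chunk i = block_word (part \<alpha> i) (L \<inter> T i) then (-1) ^ card (L \<inter> T i) else 0)"
    by (subst prod_sum_Pow_disjoint[OF _ _ disj]) (simp_all add: part_tails_def T_def k_def)
  also have "\<dots> = (\<Sum>L\<in>Pow (part_tails \<alpha>).
      if \<forall>i<k. chunk i = block_word (part \<alpha> i) L then (-1) ^ card L else 0)"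
  proof (intro sum.cong refl)
    fix L assume L: "L \<in> Pow (part_tails \<alpha>)"
    have word: "block_word (part \<alpha> i) (L \<inter> T i) = block_word (part \<alpha> i) L" if "i < k" for i
      using L that parts_disjoint[OF pos] by (intro block_word_cong) (auto simp: part_tails_def T_def k_def)
    have "(\<Union>i<k. L \<inter> T i) = L"
      using L by (auto simp: part_tails_def T_def k_def)
    then have "card L = card (\<Union>i<k. L \<inter> T i)"
      by simp
    also have "card (\<Union>i<k. L \<inter> T i) = (\<Sum>i<k. card (L \<inter> T i))"
      using parts_disjoint[OF pos] by (intro card_UN_disjoint) (auto simp: T_def k_def)
    finally have "(\<Sum>i<k. card (L \<inter> T i)) = card L" ..
    then show "(\<Prod>i<k. if chunk i = block_word (part \<alpha> i) (L \<inter> T i) then (-1) ^ card (L \<inter> T i) else 0) =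
        (if \<forall>i<k. chunk i = block_word (part \<alpha> i) L then (-1) ^ card L else (0::'k))"
      by (auto simp: word power_sum[symmetric] intro!: prod_zero)
  qed
  finally have "(Vcomp \<alpha> :: 'k ncpoly) y = (\<Sum>L\<in>Pow (part_tails \<alpha>).
      if length y = sum_list \<alpha> \<and> (\<forall>i<k. chunk i = block_word (part \<alpha> i) L) then (-1) ^ card L else 0)"
    by (auto intro: sum.neutral[symmetric])
  then show ?thesis
    by (simp add: eq_comp_word_iff chunk_def k_def)
qed

section \<open>The coefficient as a signed count of admissible sets\<close>

lemma sorted_wrt_concat:
  "sorted_wrt R (concat xss) \<longleftrightarrow> (\<forall>xs\<in>set xss. sorted_wrt R xs) \<and>
    sorted_wrt (\<lambda>xs ys. \<forall>x\<in>set xs. \<forall>y\<in>set ys. R x y) xss"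
  by (induction xss) (auto simp: sorted_wrt_append)

lemma sorted_wrt_asym_distinct: "sorted_wrt R xs \<Longrightarrow> (\<And>x y. R x y \<Longrightarrow> \<not> R y x) \<Longrightarrow> distinct xs"
  by (induction xs) auto

lemma sorted_wrt_nth_less_iff:
  assumes "sorted_wrt R xs" "\<And>x y. R x y \<Longrightarrow> \<not> R y x" "i < length xs" "j < length xs"
  shows "R (xs ! i) (xs ! j) \<longleftrightarrow> i < j"
  using assms sorted_wrt_nth_less[OF assms(1)] by (metis linorder_neqE_nat)

definition bracket_before :: "nat set \<Rightarrow> nat \<Rightarrow> nat \<Rightarrow> bool" where
  "bracket_before L a b \<longleftrightarrow> (a \<in> L \<and> b \<in> L \<and> b < a) \<or> (a \<in> L \<and> b \<notin> L) \<or> (a \<notin> L \<and> b \<notin> L \<and> a < b)"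

definition comp_before :: "nat list \<Rightarrow> nat set \<Rightarrow> nat \<Rightarrow> nat \<Rightarrow> bool" where
  "comp_before \<alpha> L a b \<longleftrightarrow> block_index (SetC \<alpha>) a < block_index (SetC \<alpha>) b \<or>
    (block_index (SetC \<alpha>) a = block_index (SetC \<alpha>) b \<and> bracket_before L a b)"

lemma comp_before_asym: "comp_before \<alpha> L a b \<Longrightarrow> \<not> comp_before \<alpha> L b a"
  by (auto simp: comp_before_def bracket_before_def)

lemma sorted_bracket_word: "sorted_wrt (<) xs \<Longrightarrow> sorted_wrt (bracket_before L) (bracket_word xs L)"
  unfolding bracket_word_def sorted_wrt_append sorted_wrt_rev
  by (auto simp: bracket_before_def intro: sorted_wrt_filter sorted_wrt_mono_rel[of _ "(<)"])

lemma sorted_comp_word: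
  assumes pos: "0 \<notin> set \<alpha>"
  shows "sorted_wrt (comp_before \<alpha> L) (comp_word \<alpha> L)"
proof -
  have "sorted_wrt (comp_before \<alpha> L) (block_word (part \<alpha> i) L)" if "i < length \<alpha>" for i
    using sorted_bracket_word[OF strict_sorted_list_of_set[of "part \<alpha> i"], of L]
      block_index_SetC_part[OF pos that]
    by (auto simp: block_word_def comp_before_def elim!: sorted_wrt_mono_rel[rotated])
  moreover have "comp_before \<alpha> L a b" if "i < j" "j < length \<alpha>" "a \<in> part \<alpha> i" "b \<in> part \<alpha> j" for i j a b
    using that block_index_SetC_part[OF pos, of i a] block_index_SetC_part[OF pos, of j b]
    by (simp add: comp_before_def)
  ultimately show ?thesis
    unfolding comp_word_def sorted_wrt_concat sorted_wrt_map
    by (auto intro: sorted_wrt_mono_rel[OF _ sorted_wrt_upt[of 0 "length \<alpha>"]])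
qed

lemma set_comp_word: "set (comp_word \<alpha> L) = {1..sum_list \<alpha>}"
  using UN_parts[of \<alpha>] by (simp add: comp_word_def atLeast0LessThan)

lemma distinct_comp_word: "0 \<notin> set \<alpha> \<Longrightarrow> distinct (comp_word \<alpha> L)"
  using sorted_comp_word comp_before_asym by (rule sorted_wrt_asym_distinct)

lemma length_comp_word: "0 \<notin> set \<alpha> \<Longrightarrow> length (comp_word \<alpha> L) = sum_list \<alpha>"
  using distinct_card[OF distinct_comp_word] by (simp add: set_comp_word)

lemma length_underline [simp]: "length (underline n \<sigma>) = n"
  by (simp add: underline_def)

lemma nth_underline [simp]: "i < n \<Longrightarrow> underline n \<sigma> ! i = \<sigma> (Suc i)"
  by (simp add: underline_def del: upt_Suc)

lemma underline_eq_iff: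
  assumes "\<sigma> permutes {1..n}" "\<tau> permutes {1..n}"
  shows "underline n \<sigma> = underline n \<tau> \<longleftrightarrow> \<sigma> = \<tau>"
proof
  assume eq: "underline n \<sigma> = underline n \<tau>"
  show "\<sigma> = \<tau>"
  proof
    fix x
    show "\<sigma> x = \<tau> x"
      using nth_underline[of "x - 1" n \<sigma>] nth_underline[of "x - 1" n \<tau>] eq
        permutes_not_in[OF assms(1), of x] permutes_not_in[OF assms(2), of x]
      by (cases "x \<in> {1..n}") auto
  qed
qed simp

lemma word_act_underline:
  assumes "\<rho> permutes {1..n}"
  shows "word_act (underline n \<sigma>) \<rho> = underline n (\<sigma> \<circ> \<rho>)"
proof (rule nth_equalityI)
  fix i assume "i < length (word_act (underline n \<sigma>) \<rho>)"
  then have "i < n" "\<rho> (Suc i) - 1 < n" "Suc (\<rho> (Suc i) - 1) = \<rho> (Suc i)"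
    using permutes_in_image[OF assms, of "Suc i"] by (auto simp: word_act_def)
  then show "word_act (underline n \<sigma>) \<rho> ! i = underline n (\<sigma> \<circ> \<rho>) ! i"
    by (simp add: word_act_def)
qed (simp add: word_act_def)

definition perm_of_word :: "nat list \<Rightarrow> nat \<Rightarrow> nat" where
  "perm_of_word xs i = (if i \<in> {1..length xs} then xs ! (i - 1) else i)"

lemma perm_of_word_permutes:
  assumes "distinct xs" "set xs = {1..length xs}"
  shows "perm_of_word xs permutes {1..length xs}"
proof (rule bij_imp_permutes)
  have "bij_betw (\<lambda>i. i - 1) {1..length xs} {..<length xs}"
    by (rule bij_betw_byWitness[where f' = Suc]) auto
  moreover have "bij_betw ((!) xs) {..<length xs} {1..length xs}"
    using assms by (intro bij_betw_nth) simp_all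
  ultimately have "bij_betw ((!) xs \<circ> (\<lambda>i. i - 1)) {1..length xs} {1..length xs}"
    by (rule bij_betw_trans)
  then show "bij_betw (perm_of_word xs) {1..length xs} {1..length xs}"
    by (rule bij_betw_cong[THEN iffD1, rotated]) (simp add: perm_of_word_def)
qed (auto simp: perm_of_word_def)

lemma underline_perm_of_word: "underline (length xs) (perm_of_word xs) = xs"
  by (rule nth_equalityI) (simp_all add: perm_of_word_def)

lemma inv_perm_of_word_less_iff:
  assumes "distinct xs" "set xs = {1..length xs}" "sorted_wrt R xs" "\<And>x y. R x y \<Longrightarrow> \<not> R y x"
    and "a \<in> set xs" "b \<in> set xs"
  shows "inv (perm_of_word xs) a < inv (perm_of_word xs) b \<longleftrightarrow> R a b"
proof -
  let ?\<sigma> = "perm_of_word xs"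
  have \<sigma>: "?\<sigma> permutes {1..length xs}"
    using assms(1,2) by (rule perm_of_word_permutes)
  have pos: "inv ?\<sigma> c \<in> {1..length xs}" "xs ! (inv ?\<sigma> c - 1) = c" if "c \<in> set xs" for c
  proof -
    show "inv ?\<sigma> c \<in> {1..length xs}"
      using that assms(2) permutes_in_image[OF permutes_inv[OF \<sigma>]] by simp
    then show "xs ! (inv ?\<sigma> c - 1) = c"
      using permutes_inverses(1)[OF \<sigma>, of c] by (simp add: perm_of_word_def)
  qed
  have "R a b \<longleftrightarrow> inv ?\<sigma> a - 1 < inv ?\<sigma> b - 1"
    using sorted_wrt_nth_less_iff[OF assms(3,4), of "inv ?\<sigma> a - 1" "inv ?\<sigma> b - 1"]
      pos[OF assms(5)] pos[OF assms(6)] by auto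
  then show ?thesis
    using pos(1)[OF assms(5)] pos(1)[OF assms(6)] by auto
qed

lemma comp_inv_eq_iff:
  assumes "v permutes S" "t permutes S"
  shows "g \<circ> inv v = t \<longleftrightarrow> v = inv t \<circ> g"
proof -
  have "g \<circ> inv v = t \<longleftrightarrow> g = t \<circ> v"
    using permutes_inv_o[OF assms(1)] by (auto simp flip: o_assoc)
  also have "\<dots> \<longleftrightarrow> v = inv t \<circ> g"
    using permutes_inv_o[OF assms(2)] by (auto simp: o_assoc)
  finally show ?thesis .
qed

lemma actBu_underline_coeff:
  fixes w u :: "nat \<Rightarrow> nat"
  assumes pos: "0 \<notin> set \<beta>" and n: "sum_list \<beta> = n"
    and w: "w permutes {1..n}" and u: "u permutes {1..n}"
  shows "actBu n (Vcomp \<beta> :: 'k::comm_ring_1 ncpoly) I u (underline n w) =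
    (\<Sum>L\<in>Pow (part_tails \<beta>).
      if Des n (inv (perm_of_word (comp_word \<beta> L)) \<circ> (w \<circ> inv u)) \<subseteq> I then (-1) ^ card L else 0)"
proof -
  define P where "P = {v \<in> perms n. Des n v \<subseteq> I}"
  define g where "g = w \<circ> inv u"
  define t where "t L = perm_of_word (comp_word \<beta> L)" for L
  have g: "g permutes {1..n}"
    unfolding g_def using w u by (simp add: permutes_compose permutes_inv)
  have t: "t L permutes {1..n}" "underline n (t L) = comp_word \<beta> L" for L
    using perm_of_word_permutes[OF distinct_comp_word[OF pos], of L] underline_perm_of_word[of "comp_word \<beta> L"]
    by (simp_all add: t_def set_comp_word length_comp_word[OF pos] n)
  have "finite P"
    unfolding P_def perms_def using finite_permutations[of "{1..n}"] by simp
  have summand: "act n (Vcomp \<beta> :: 'k ncpoly) (v \<circ> u) (underline n w) =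
      (\<Sum>L\<in>Pow (part_tails \<beta>). if v = inv (t L) \<circ> g then (-1) ^ card L else 0)"
    if "v \<in> P" for v
  proof -
    have v: "v permutes {1..n}"
      using that by (simp add: P_def perms_def)
    have "w \<circ> inv (v \<circ> u) = g \<circ> inv v"
      using v u by (simp add: g_def o_inv_distrib permutes_bij o_assoc)
    then have "word_act (underline n w) (inv (v \<circ> u)) = underline n (g \<circ> inv v)"
      using v u by (simp add: word_act_underline permutes_compose permutes_inv)
    moreover have "underline n (g \<circ> inv v) = comp_word \<beta> L \<longleftrightarrow> v = inv (t L) \<circ> g" for L
      using underline_eq_iff[OF permutes_compose[OF permutes_inv[OF v] g] t(1)] comp_inv_eq_iff[OF v t(1)]
      by (simp add: t(2))
    ultimately show ?thesis
      by (simp add: act_def Vcomp_coeff[OF pos])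
  qed
  have "actBu n (Vcomp \<beta> :: 'k ncpoly) I u (underline n w) =
      (\<Sum>v\<in>P. \<Sum>L\<in>Pow (part_tails \<beta>). if v = inv (t L) \<circ> g then (-1) ^ card L else 0)"
    unfolding actBu_def P_def[symmetric] by (intro sum.cong refl) (rule summand)
  also have "\<dots> = (\<Sum>L\<in>Pow (part_tails \<beta>). if inv (t L) \<circ> g \<in> P then (-1) ^ card L else 0)"
    by (subst sum.swap) (simp add: \<open>finite P\<close> sum.delta')
  also have "\<dots> = (\<Sum>L\<in>Pow (part_tails \<beta>). if Des n (inv (t L) \<circ> g) \<subseteq> I then (-1) ^ card L else 0)"
    using g t(1) by (simp add: P_def perms_def permutes_compose permutes_inv)
  finally show ?thesis
    by (simp add: t_def g_def)
qed

lemma block_index_eq_imp_notin: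
  assumes "block_index I j = block_index I j'" "j \<le> k" "k < j'"
  shows "k \<notin> I"
proof
  assume "k \<in> I"
  then have "block_index I j < block_index I j'"
    using block_index_mono[of j k I] block_index_mono[of "Suc k" j' I] block_index_Suc[of I k] assms(2,3)
    by simp
  with assms(1) show False
    by simp
qed

lemma less_if_ascents_between:
  fixes v :: "nat \<Rightarrow> 'a::order"
  assumes "j < j'" "\<And>k. j \<le> k \<Longrightarrow> k < j' \<Longrightarrow> v k < v (Suc k)"
  shows "v j < v j'"
proof -
  from assms(1) have "Suc j \<le> j'"
    by simp
  then show ?thesis
  proof (induction j' rule: dec_induct)
    case (step m)
    then have "v m < v (Suc m)"
      using assms(2) by simp
    with step.IH show ?case
      by (rule less_trans)
  qed (use assms in simp)
qed

lemma Des_subset_iff: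
  assumes inj: "inj_on v {1..n}"
  shows "Des n v \<subseteq> I \<longleftrightarrow>
    (\<forall>j\<in>{1..n}. \<forall>j'\<in>{1..n}. j < j' \<and> block_index I j = block_index I j' \<longrightarrow> v j < v j')"
proof
  assume D: "Des n v \<subseteq> I"
  have ascent: "v k < v (Suc k)" if "k \<in> {1..n-1}" "k \<notin> I" for k
  proof -
    have "k \<in> {1..n}" "Suc k \<in> {1..n}"
      using that by auto
    then have "v k \<noteq> v (Suc k)"
      using inj_onD[OF inj] by fastforce
    moreover have "\<not> v (Suc k) < v k"
      using that D by (auto simp: Des_def)
    ultimately show ?thesis
      by simp
  qed
  show "\<forall>j\<in>{1..n}. \<forall>j'\<in>{1..n}. j < j' \<and> block_index I j = block_index I j' \<longrightarrow> v j < v j'"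
  proof (intro ballI impI, elim conjE)
    fix j j' assume j: "j \<in> {1..n}" "j' \<in> {1..n}" "j < j'" "block_index I j = block_index I j'"
    show "v j < v j'"
    proof (rule less_if_ascents_between[OF j(3)])
      fix k assume "j \<le> k" "k < j'"
      then show "v k < v (Suc k)"
        using j ascent block_index_eq_imp_notin[OF j(4)] by auto
    qed
  qed
next
  assume H: "\<forall>j\<in>{1..n}. \<forall>j'\<in>{1..n}. j < j' \<and> block_index I j = block_index I j' \<longrightarrow> v j < v j'"
  show "Des n v \<subseteq> I"
  proof
    fix i assume "i \<in> Des n v"
    then have "i \<in> {1..n-1}" "v (Suc i) < v i"
      by (auto simp: Des_def)
    show "i \<in> I"
    proof (rule ccontr)
      assume "i \<notin> I"
      then have "v i < v (Suc i)"
        using H \<open>i \<in> {1..n-1}\<close> block_index_Suc[of I i] by auto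
      with \<open>v (Suc i) < v i\<close> show False
        by simp
    qed
  qed
qed

definition admissible :: "nat \<Rightarrow> nat list \<Rightarrow> nat set \<Rightarrow> (nat \<Rightarrow> nat) \<Rightarrow> nat set \<Rightarrow> bool" where
  "admissible n \<beta> I g L \<longleftrightarrow> (\<forall>j\<in>{1..n}. \<forall>j'\<in>{1..n}.
    j < j' \<and> block_index I j = block_index I j' \<longrightarrow> comp_before \<beta> L (g j) (g j'))"

lemma actBu_underline_eq_sum_admissible:
  fixes w u :: "nat \<Rightarrow> nat"
  assumes pos: "0 \<notin> set \<beta>" and n: "sum_list \<beta> = n"
    and w: "w permutes {1..n}" and u: "u permutes {1..n}"
  shows "actBu n (Vcomp \<beta> :: 'k::comm_ring_1 ncpoly) I u (underline n w) =
    (\<Sum>L\<in>Pow (part_tails \<beta>). if admissible n \<beta> I (w \<circ> inv u) L then (-1) ^ card L else 0)"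
  unfolding actBu_underline_coeff[OF assms]
proof (intro sum.cong refl if_cong)
  fix L
  define g where "g = w \<circ> inv u"
  define t where "t = perm_of_word (comp_word \<beta> L)"
  have g: "g permutes {1..n}"
    unfolding g_def using w u by (simp add: permutes_compose permutes_inv)
  have t: "t permutes {1..n}"
    using perm_of_word_permutes[OF distinct_comp_word[OF pos], of L]
    by (simp add: t_def set_comp_word length_comp_word[OF pos] n)
  have order: "inv t (g j) < inv t (g j') \<longleftrightarrow> comp_before \<beta> L (g j) (g j')" if "j \<in> {1..n}" "j' \<in> {1..n}" for j j'
    unfolding t_def using that permutes_in_image[OF g]
    by (intro inv_perm_of_word_less_iff distinct_comp_word pos sorted_comp_word comp_before_asym)
      (simp_all add: set_comp_word length_comp_word[OF pos] n)
  have "Des n (inv t \<circ> g) \<subseteq> I \<longleftrightarrow> admissible n \<beta> I g L"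
    unfolding Des_subset_iff[OF permutes_inj_on[OF permutes_compose[OF g permutes_inv[OF t]]]]
      admissible_def by (simp add: order)
  then show "Des n (inv (perm_of_word (comp_word \<beta> L)) \<circ> (w \<circ> inv u)) \<subseteq> I \<longleftrightarrow>
      admissible n \<beta> I (w \<circ> inv u) L"
    by (simp add: t_def g_def)
qed

section \<open>The diagonal coefficient and a sign-reversing involution\<close>

lemma admissible_id_iff:
  assumes pos: "0 \<notin> set \<beta>" and n: "sum_list \<beta> = n" and L: "L \<subseteq> part_tails \<beta>"
  shows "admissible n \<beta> (SetC \<beta>) id L \<longleftrightarrow> L = {}"
proof
  assume adm: "admissible n \<beta> (SetC \<beta>) id L"
  show "L = {}"
  proof (rule ccontr)
    assume "L \<noteq> {}"
    then obtain x where "x \<in> L"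
      by blast
    then obtain y where x: "x \<in> {1..n}" and y: "y \<in> {1..n}" "y < x"
      and same: "block_index (SetC \<beta>) y = block_index (SetC \<beta>) x"
      using L mem_part_tails_iff[OF pos] n by blast
    define i where "i = block_index (SetC \<beta>) x"
    define m where "m = Min (part \<beta> i)"
    have i: "i < length \<beta>"
      using block_index_SetC_less[OF pos] x n by (simp add: i_def)
    have part: "z \<in> part \<beta> i \<longleftrightarrow> z \<in> {1..n} \<and> block_index (SetC \<beta>) z = i" for z
      using mem_part_iff[OF pos i] n by simp
    have m: "m \<in> part \<beta> i" "\<And>z. z \<in> part \<beta> i \<Longrightarrow> m \<le> z"
      using Min_in[OF finite_part part_nonempty[OF pos i]] by (simp_all add: m_def)
    have "m \<le> y"
      using m(2) part y same by (simp add: i_def)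
    moreover have "m \<notin> L"
      using m L part mem_part_tails_iff[OF pos] n by (metis in_mono leD)
    moreover have "comp_before \<beta> L m x"
      using adm m(1) part x y \<open>m \<le> y\<close> by (auto simp: admissible_def i_def)
    ultimately show False
      using \<open>x \<in> L\<close> m(1) part by (auto simp: comp_before_def bracket_before_def i_def)
  qed
qed (auto simp: admissible_def comp_before_def bracket_before_def)

lemma coeff_diagonal:
  assumes pos: "0 \<notin> set \<beta>" and n: "sum_list \<beta> = n" and w: "w permutes {1..n}"
  shows "actBu n (Vcomp \<beta> :: 'k::comm_ring_1 ncpoly) (SetC \<beta>) w (underline n w) = 1"
proof -
  have "actBu n (Vcomp \<beta> :: 'k ncpoly) (SetC \<beta>) w (underline n w) =
      (\<Sum>L\<in>Pow (part_tails \<beta>). if L = {} then 1 else 0)"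
    unfolding actBu_underline_eq_sum_admissible[OF pos n w w] permutes_inv_o(1)[OF w]
    by (intro sum.cong refl) (simp add: admissible_id_iff[OF pos n])
  also have "\<dots> = 1"
    by (simp add: part_tails_def)
  finally show ?thesis .
qed

lemma sum_Pow_alternating_eq_0:
  assumes "finite N" "e \<in> N" "\<And>L. L \<subseteq> N - {e} \<Longrightarrow> P (insert e L) \<longleftrightarrow> P L"
  shows "(\<Sum>L\<in>Pow N. if P L then (-1) ^ card L else (0::'k::comm_ring_1)) = 0"
proof -
  have N: "N = insert e (N - {e})"
    using assms(2) by blast
  have "card (insert e L) = Suc (card L)" if "L \<subseteq> N - {e}" for L
    using that assms(1) by (meson DiffD2 card_insert_disjoint finite_Diff finite_subset insertI1 subsetD)
  then show ?thesis
    using assms(1,3) by (subst N, subst sum_Pow_insert) (auto intro: sum.neutral)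
qed

lemma bracket_before_insert:
  "e \<notin> L \<Longrightarrow> (a = e \<Longrightarrow> e < b) \<Longrightarrow> (b = e \<Longrightarrow> e < a) \<Longrightarrow>
    bracket_before (insert e L) a b \<longleftrightarrow> bracket_before L a b"
  by (auto simp: bracket_before_def)

lemma admissible_insert_iff:
  assumes g: "g permutes {1..n}" and e: "e \<notin> L"
    and least: "\<And>c. c \<in> {1..n} \<Longrightarrow> block_index (SetC \<beta>) c = block_index (SetC \<beta>) e \<Longrightarrow>
      block_index I (inv g c) = block_index I (inv g e) \<Longrightarrow> e \<le> c"
  shows "admissible n \<beta> I g (insert e L) \<longleftrightarrow> admissible n \<beta> I g L"
  unfolding admissible_def comp_before_def
proof (intro ball_cong refl imp_cong, elim conjE)
  let ?b = "block_index (SetC \<beta>)"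
  fix j j' assume j: "j \<in> {1..n}" "j' \<in> {1..n}" "j < j'" "block_index I j = block_index I j'"
  have "g j \<noteq> g j'"
    using j(3) permutes_inj[OF g] by (auto dest: injD)
  moreover have "g j \<in> {1..n}" "g j' \<in> {1..n}"
    using j permutes_in_image[OF g] by auto
  moreover have "block_index I (inv g (g j)) = block_index I (inv g (g j'))"
    using j(4) by (simp add: permutes_inverses(2)[OF g])
  ultimately have "?b (g j) = ?b (g j') \<Longrightarrow>
      bracket_before (insert e L) (g j) (g j') \<longleftrightarrow> bracket_before L (g j) (g j')"
    using least[of "g j"] least[of "g j'"] e by (intro bracket_before_insert) (auto simp: le_neq_trans)
  then show "(?b (g j) < ?b (g j') \<or> ?b (g j) = ?b (g j') \<and> bracket_before (insert e L) (g j) (g j')) \<longleftrightarrow>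
      (?b (g j) < ?b (g j') \<or> ?b (g j) = ?b (g j') \<and> bracket_before L (g j) (g j'))"
    by blast
qed

lemma sum_admissible_eq_0_if_split:
  assumes pos: "0 \<notin> set \<beta>" and n: "sum_list \<beta> = n" and g: "g permutes {1..n}"
    and ab: "a \<in> {1..n}" "b \<in> {1..n}" "block_index (SetC \<beta>) a = block_index (SetC \<beta>) b"
      "block_index I (inv g a) \<noteq> block_index I (inv g b)"
  shows "(\<Sum>L\<in>Pow (part_tails \<beta>). if admissible n \<beta> I g L then (-1) ^ card L else (0::'k::comm_ring_1)) = 0"
proof -
  let ?blk = "block_index (SetC \<beta>)"
  define lab where "lab x = block_index I (inv g x)" for x
  define B where "B = {x \<in> {1..n}. ?blk x = ?blk a}"
  define m where "m = Min B"
  have "finite B" "a \<in> B" "b \<in> B"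
    using ab by (auto simp: B_def)
  then have m: "m \<in> B" "\<And>x. x \<in> B \<Longrightarrow> m \<le> x"
    unfolding m_def by (auto intro: Min_in)
  obtain c where c: "c \<in> B" "lab c \<noteq> lab m"
    using \<open>a \<in> B\<close> \<open>b \<in> B\<close> ab(4) unfolding lab_def by metis
  text \<open>The least letter \<open>e\<close> of its label class inside the block \<open>B\<close> is not the minimum of \<open>B\<close>,
    so it may be toggled in \<open>L\<close>.\<close>
  define E where "E = {x \<in> B. lab x = lab c}"
  define e where "e = Min E"
  have "finite E" "c \<in> E"
    using \<open>finite B\<close> c by (auto simp: E_def)
  then have e: "e \<in> E" "\<And>x. x \<in> E \<Longrightarrow> e \<le> x"
    unfolding e_def by (auto intro: Min_in)
  have "e \<in> B" "lab e \<noteq> lab m"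
    using e(1) c(2) by (auto simp: E_def)
  then have "m < e"
    using m(2)[of e] by (cases "m = e") auto
  then have "e \<in> part_tails \<beta>"
    using \<open>e \<in> B\<close> m(1) unfolding mem_part_tails_iff[OF pos] n by (auto simp: B_def)
  moreover have "admissible n \<beta> I g (insert e L) \<longleftrightarrow> admissible n \<beta> I g L" if "L \<subseteq> part_tails \<beta> - {e}" for L
    using that e by (intro admissible_insert_iff[OF g]) (auto simp: E_def B_def lab_def)
  ultimately show ?thesis
    by (intro sum_Pow_alternating_eq_0) (simp_all add: part_tails_def)
qed

section \<open>Refinement of compositions\<close>

lemma image_Collect_permutes:
  assumes "h permutes A"
  shows "h ` {x \<in> A. P (h x)} = {y \<in> A. P y}"
proof (intro equalityI subsetI)
  fix y assume y: "y \<in> {y \<in> A. P y}"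
  then have "inv h y \<in> A" "h (inv h y) = y"
    using permutes_in_image[OF permutes_inv[OF assms]] permutes_inverses(1)[OF assms] by auto
  with y show "y \<in> h ` {x \<in> A. P (h x)}"
    by (metis (mono_tags, lifting) image_eqI mem_Collect_eq)
qed (use permutes_in_image[OF assms] in auto)

lemma card_fibre_block_index:
  assumes pos: "0 \<notin> set \<alpha>"
  shows "card {x \<in> {1..sum_list \<alpha>}. f (block_index (SetC \<alpha>) x) = j} =
    (\<Sum>i\<in>{i. i < length \<alpha> \<and> f i = j}. \<alpha> ! i)"
proof -
  have "{x \<in> {1..sum_list \<alpha>}. f (block_index (SetC \<alpha>) x) = j} = (\<Union>i\<in>{i. i < length \<alpha> \<and> f i = j}. part \<alpha> i)"
    using mem_part_iff[OF pos] block_index_SetC_less[OF pos] by auto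
  also have "card \<dots> = (\<Sum>i\<in>{i. i < length \<alpha> \<and> f i = j}. \<alpha> ! i)"
    using parts_disjoint[OF pos] by (subst card_UN_disjoint) (auto simp: card_part)
  finally show ?thesis .
qed

lemma block_map_exists:
  assumes pos\<beta>: "0 \<notin> set \<beta>" and n\<beta>: "sum_list \<beta> = n"
    and pos\<gamma>: "0 \<notin> set \<gamma>" and n\<gamma>: "sum_list \<gamma> = n" and h: "h permutes {1..n}"
    and refines: "\<And>a b. a \<in> {1..n} \<Longrightarrow> b \<in> {1..n} \<Longrightarrow>
      block_index (SetC \<beta>) a = block_index (SetC \<beta>) b \<Longrightarrow>
      block_index (SetC \<gamma>) (h a) = block_index (SetC \<gamma>) (h b)"
  obtains f where "\<And>i. i < length \<beta> \<Longrightarrow> f i < length \<gamma>"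
    "\<And>j. j < length \<gamma> \<Longrightarrow> \<gamma> ! j = (\<Sum>i\<in>{i. i < length \<beta> \<and> f i = j}. \<beta> ! i)"
    "\<And>x. x \<in> {1..n} \<Longrightarrow> block_index (SetC \<gamma>) (h x) = f (block_index (SetC \<beta>) x)"
proof
  let ?b = "block_index (SetC \<beta>)" and ?c = "block_index (SetC \<gamma>)"
  define f where "f i = ?c (h (psum \<beta> i + 1))" for i
  have first: "psum \<beta> i + 1 \<in> part \<beta> i" "psum \<beta> i + 1 \<in> {1..n}" if "i < length \<beta>" for i
    using Min_in[OF finite_part part_nonempty[OF pos\<beta> that]] Min_part[OF pos\<beta> that]
      part_subset[OF that] n\<beta> by auto
  show f_block: "?c (h x) = f (?b x)" if x: "x \<in> {1..n}" for x
  proof -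
    have "?b x < length \<beta>"
      using block_index_SetC_less[OF pos\<beta>] x n\<beta> by simp
    then show ?thesis
      using refines[OF x first(2)] block_index_SetC_part[OF pos\<beta> _ first(1)] by (simp add: f_def)
  qed
  show "f i < length \<gamma>" if "i < length \<beta>" for i
    using block_index_SetC_less[OF pos\<gamma>] permutes_in_image[OF h] first(2)[OF that] n\<gamma>
    by (simp add: f_def)
  fix j assume j: "j < length \<gamma>"
  have "part \<gamma> j = {y \<in> {1..n}. ?c y = j}"
    using mem_part_iff[OF pos\<gamma> j] n\<gamma> by auto
  then have "\<gamma> ! j = card {y \<in> {1..n}. ?c y = j}"
    using card_part[OF j] by simp
  also have "\<dots> = card (h ` {x \<in> {1..n}. ?c (h x) = j})"
    using image_Collect_permutes[OF h, where P = "\<lambda>y. ?c y = j"] by simp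
  also have "\<dots> = card {x \<in> {1..n}. f (?b x) = j}"
    using f_block by (simp add: card_image[OF permutes_inj_on[OF h]] cong: conj_cong)
  finally show "\<gamma> ! j = (\<Sum>i\<in>{i. i < length \<beta> \<and> f i = j}. \<beta> ! i)"
    using card_fibre_block_index[OF pos\<beta>, of f j] n\<beta> by simp
qed

lemma pi_le_mset_cong:
  assumes "mset lam' = mset lam" "mset mu' = mset mu" "pi_le lam mu"
  shows "pi_le lam' mu'"
proof -
  obtain f where f_range: "\<And>i. i < length lam \<Longrightarrow> f i < length mu"
    and f_sum: "\<And>j. j < length mu \<Longrightarrow> mu ! j = (\<Sum>i\<in>{i. i < length lam \<and> f i = j}. lam ! i)"
    using assms(3) unfolding pi_le_def by blast
  obtain p where p: "p permutes {..<length lam}" "permute_list p lam = lam'"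
    using mset_eq_permutation[OF assms(1)] by blast
  obtain q where q: "q permutes {..<length mu}" "permute_list q mu = mu'"
    using mset_eq_permutation[OF assms(2)] by blast
  have len: "length lam' = length lam" "length mu' = length mu"
    using p(2) q(2) by auto
  define f' where "f' i = inv q (f (p i))" for i
  show ?thesis
    unfolding pi_le_def
  proof (intro exI[of _ f'] conjI allI impI)
    fix i assume "i < length lam'"
    then show "f' i < length mu'"
      using f_range permutes_in_image[OF p(1)] permutes_in_image[OF permutes_inv[OF q(1)]] len
      by (simp add: f'_def)
  next
    fix j assume "j < length mu'"
    then have j: "j < length mu" "q j < length mu"
      using len permutes_in_image[OF q(1)] by auto
    have fibre: "{i. i < length lam \<and> f i = q j} = p ` {i. i < length lam' \<and> f' i = j}"
    proof (intro equalityI subsetI)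
      fix i assume i: "i \<in> {i. i < length lam \<and> f i = q j}"
      then have "inv p i < length lam'" "p (inv p i) = i"
        using permutes_in_image[OF permutes_inv[OF p(1)]] permutes_inverses(1)[OF p(1)] len by auto
      moreover have "f' (inv p i) = j"
        using i \<open>p (inv p i) = i\<close> permutes_inverses(2)[OF q(1)] by (simp add: f'_def)
      ultimately show "i \<in> p ` {i. i < length lam' \<and> f' i = j}"
        by (metis (mono_tags, lifting) image_eqI mem_Collect_eq)
    next
      fix i assume "i \<in> p ` {i. i < length lam' \<and> f' i = j}"
      then obtain k where "k < length lam'" "inv q (f (p k)) = j" "i = p k"
        by (auto simp: f'_def)
      then show "i \<in> {i. i < length lam \<and> f i = q j}"
        using permutes_in_image[OF p(1)] permutes_inverses(1)[OF q(1)] len by force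
    qed
    have "mu' ! j = mu ! q j"
      using q j by (auto simp: permute_list_nth)
    also have "\<dots> = (\<Sum>i\<in>p ` {i. i < length lam' \<and> f' i = j}. lam ! i)"
      using f_sum[OF j(2)] fibre by simp
    also have "\<dots> = (\<Sum>i\<in>{i. i < length lam' \<and> f' i = j}. lam' ! i)"
      using p len by (subst sum.reindex[OF permutes_inj_on[OF p(1)]]) (auto simp: permute_list_nth)
    finally show "mu' ! j = (\<Sum>i\<in>{i. i < length lam' \<and> f' i = j}. lam' ! i)" .
  qed
qed

lemma pi_le_witness_inj_on:
  assumes pos: "0 \<notin> set \<gamma>" and len: "length \<beta> = length \<gamma>"
    and f_range: "\<And>i. i < length \<beta> \<Longrightarrow> f i < length \<gamma>"
    and f_sum: "\<And>j. j < length \<gamma> \<Longrightarrow> \<gamma> ! j = (\<Sum>i\<in>{i. i < length \<beta> \<and> f i = j}. \<beta> ! i)"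
  shows "inj_on f {..<length \<beta>}"
proof (rule eq_card_imp_inj_on)
  have "j \<in> f ` {..<length \<beta>}" if "j < length \<beta>" for j
  proof -
    have "\<gamma> ! j \<in> set \<gamma>"
      using that len by simp
    then have "\<gamma> ! j \<noteq> 0"
      using pos by metis
    moreover have "\<gamma> ! j = (\<Sum>i\<in>{i. i < length \<beta> \<and> f i = j}. \<beta> ! i)"
      using f_sum \<open>j < length \<beta>\<close> len by simp
    ultimately have "{i. i < length \<beta> \<and> f i = j} \<noteq> {}"
      by (metis sum.empty)
    then show ?thesis
      by blast
  qed
  then have "f ` {..<length \<beta>} = {..<length \<beta>}"
    using f_range len by auto
  then show "card (f ` {..<length \<beta>}) = card {..<length \<beta>}"
    by simp
qed simp

lemma blocks_correspond_if_not_pi_less: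
  assumes pos\<beta>: "0 \<notin> set \<beta>" and n\<beta>: "sum_list \<beta> = n"
    and pos\<gamma>: "0 \<notin> set \<gamma>" and n\<gamma>: "sum_list \<gamma> = n" and h: "h permutes {1..n}"
    and refines: "\<And>a b. a \<in> {1..n} \<Longrightarrow> b \<in> {1..n} \<Longrightarrow>
      block_index (SetC \<beta>) a = block_index (SetC \<beta>) b \<Longrightarrow>
      block_index (SetC \<gamma>) (h a) = block_index (SetC \<gamma>) (h b)"
    and not_less: "\<not> pi_less (sortdec \<beta>) (sortdec \<gamma>)"
    and ab: "a \<in> {1..n}" "b \<in> {1..n}"
  shows "block_index (SetC \<beta>) a = block_index (SetC \<beta>) b \<longleftrightarrow>
    block_index (SetC \<gamma>) (h a) = block_index (SetC \<gamma>) (h b)"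
proof -
  obtain f where f_range: "\<And>i. i < length \<beta> \<Longrightarrow> f i < length \<gamma>"
    and f_sum: "\<And>j. j < length \<gamma> \<Longrightarrow> \<gamma> ! j = (\<Sum>i\<in>{i. i < length \<beta> \<and> f i = j}. \<beta> ! i)"
    and f_block: "\<And>x. x \<in> {1..n} \<Longrightarrow> block_index (SetC \<gamma>) (h x) = f (block_index (SetC \<beta>) x)"
    using block_map_exists[OF assms(1-6)] by blast
  have "pi_le \<beta> \<gamma>"
    unfolding pi_le_def using f_range f_sum by blast
  then have "pi_le (sortdec \<beta>) (sortdec \<gamma>)"
    by (rule pi_le_mset_cong[rotated 2]) (simp_all add: sortdec_def)
  then have "mset \<beta> = mset \<gamma>"
    using not_less by (metis pi_less_def mset_rev mset_sort sortdec_def)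
  then have "inj_on f {..<length \<beta>}"
    using pi_le_witness_inj_on[OF pos\<gamma> _ f_range f_sum] by (metis size_mset)
  moreover have "block_index (SetC \<beta>) x \<in> {..<length \<beta>}" if "x \<in> {1..n}" for x
    using block_index_SetC_less[OF pos\<beta>] that n\<beta> by simp
  ultimately show ?thesis
    using ab f_block by (metis inj_on_eq_iff)
qed

section \<open>Left-to-right minima\<close>

lemma LRM'_subset: "LRM' n u \<subseteq> {1..n-1}"
  by (auto simp: LRM'_def LRM_def)

lemma cLRM'_composition: "0 \<notin> set (cLRM' n u) \<and> sum_list (cLRM' n u) = n \<and> SetC (cLRM' n u) = LRM' n u"
  unfolding cLRM'_def by (rule Comp_composition[OF LRM'_subset])

lemma LRM_before:
  assumes u: "u permutes {1..n}" and m: "m \<in> LRM n u" and x: "x \<in> {1..n}" "x < m"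
  shows "inv u m < inv u x"
proof (rule ccontr)
  assume "\<not> inv u m < inv u x"
  moreover have "inv u x \<noteq> inv u m"
  proof
    assume "inv u x = inv u m"
    then have "u (inv u x) = u (inv u m)"
      by simp
    with x(2) show False
      by (simp add: permutes_inverses(1)[OF u])
  qed
  moreover have "1 \<le> inv u x"
    using permutes_in_image[OF permutes_inv[OF u]] x(1) by auto
  ultimately have "m < u (inv u x)"
    using m by (auto simp: LRM_def)
  with x(2) show False
    by (simp add: permutes_inverses(1)[OF u])
qed

lemma Min_prefix_in_LRM:
  assumes u: "u permutes {1..n}" and p: "p \<in> {1..n}"
  shows "Min (u ` {1..p}) \<in> LRM n u"
proof -
  define z where "z = Min (u ` {1..p})"
  have "z \<in> u ` {1..p}"
    unfolding z_def using p by (intro Min_in) auto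
  then obtain k0 where k0: "k0 \<in> {1..p}" "u k0 = z"
    by blast
  then have "z \<in> {1..n}" "inv u z = k0"
    using p permutes_in_image[OF u, of k0] permutes_inv_eq[OF u] by auto
  moreover have "z < u k" if "1 \<le> k" "k < k0" for k
  proof -
    have "z \<le> u k"
      using that k0(1) by (auto simp: z_def)
    moreover have "u k \<noteq> z"
      using that k0(2) permutes_inj[OF u] by (auto dest: injD)
    ultimately show ?thesis
      by simp
  qed
  ultimately show ?thesis
    by (auto simp: LRM_def z_def)
qed

lemma one_in_LRM:
  assumes u: "u permutes {1..n}" and "1 \<le> n"
  shows "1 \<in> LRM n u"
proof -
  have "Min {1..n} = (1::nat)"
    using assms(2) by (intro Min_eqI) auto
  then show ?thesis
    using Min_prefix_in_LRM[OF u, of n] assms by (simp add: permutes_image)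
qed

lemma mem_LRM'_iff: "i \<in> LRM' n u \<longleftrightarrow> 1 \<le> i \<and> Suc i \<in> LRM n u"
proof
  assume "i \<in> LRM' n u"
  then obtain l where "l \<in> LRM n u" "1 < l" "i = l - 1"
    by (auto simp: LRM'_def)
  then show "1 \<le> i \<and> Suc i \<in> LRM n u"
    by simp
next
  assume "1 \<le> i \<and> Suc i \<in> LRM n u"
  then show "i \<in> LRM' n u"
    unfolding LRM'_def by (intro CollectI exI[of _ "Suc i"]) simp
qed

lemma block_index_LRM'_eq_iff:
  assumes "1 \<le> x" "x \<le> y"
  shows "block_index (LRM' n u) x = block_index (LRM' n u) y \<longleftrightarrow> \<not> (\<exists>l\<in>LRM n u. x < l \<and> l \<le> y)"
proof -
  let ?I = "LRM' n u"
  have split: "{i \<in> ?I. i < y} = {i \<in> ?I. i < x} \<union> {i \<in> ?I. x \<le> i \<and> i < y}"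
    using assms by auto
  have "block_index ?I y = block_index ?I x + card {i \<in> ?I. x \<le> i \<and> i < y}"
    unfolding block_index_def split by (rule card_Un_disjoint) auto
  then have "block_index ?I x = block_index ?I y \<longleftrightarrow> {i \<in> ?I. x \<le> i \<and> i < y} = {}"
    by simp
  also have "\<dots> \<longleftrightarrow> \<not> (\<exists>l\<in>LRM n u. x < l \<and> l \<le> y)"
  proof
    assume empty: "{i \<in> ?I. x \<le> i \<and> i < y} = {}"
    show "\<not> (\<exists>l\<in>LRM n u. x < l \<and> l \<le> y)"
    proof
      assume "\<exists>l\<in>LRM n u. x < l \<and> l \<le> y"
      then obtain l where "l \<in> LRM n u" "x < l" "l \<le> y"
        by blast
      then have "l - 1 \<in> {i \<in> ?I. x \<le> i \<and> i < y}"
        using assms by (simp add: mem_LRM'_iff, linarith)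
      with empty show False
        by blast
    qed
  qed (auto simp: mem_LRM'_iff)
  finally show ?thesis .
qed

lemma LRM_block_min:
  assumes u: "u permutes {1..n}" and y: "y \<in> {1..n}"
  obtains m where "m \<in> LRM n u" "m \<le> y" "block_index (LRM' n u) m = block_index (LRM' n u) y"
    "\<And>y'. y' \<in> {1..n} \<Longrightarrow> block_index (LRM' n u) y' = block_index (LRM' n u) y \<Longrightarrow> m \<le> y'"
proof
  let ?b = "block_index (LRM' n u)"
  define M where "M = {l \<in> LRM n u. l \<le> y}"
  have "finite M" "1 \<in> M"
    using y one_in_LRM[OF u] by (auto simp: M_def)
  then have "Max M \<in> M"
    using Max_in by blast
  have max: "l \<le> Max M" if "l \<in> LRM n u" "l \<le> y" for l
    using Max_ge[OF \<open>finite M\<close>] that by (simp add: M_def)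
  have m: "Max M \<in> LRM n u" "Max M \<le> y"
    using \<open>Max M \<in> M\<close> by (simp_all add: M_def)
  have "1 \<le> Max M"
    using m(1) by (auto simp: LRM_def)
  moreover have "\<not> (\<exists>l\<in>LRM n u. Max M < l \<and> l \<le> y)"
    using max by (meson leD)
  ultimately show "?b (Max M) = ?b y"
    using m(2) by (subst block_index_LRM'_eq_iff) auto
  show "Max M \<in> LRM n u" "Max M \<le> y"
    by (fact m)+
  show "Max M \<le> y'" if "y' \<in> {1..n}" "?b y' = ?b y" for y'
  proof (rule ccontr)
    assume "\<not> Max M \<le> y'"
    then have "?b y' \<noteq> ?b y"
      using that(1) m by (subst block_index_LRM'_eq_iff) (auto intro!: bexI[of _ "Max M"])
    with that(2) show False
      by simp
  qed
qed

lemma LRM_first_in_block: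
  assumes u: "u permutes {1..n}" and m: "m \<in> LRM n u" and y: "y \<in> {1..n}" "m \<le> y"
    and same: "block_index (LRM' n u) m = block_index (LRM' n u) y"
  shows "inv u m \<le> inv u y"
proof (rule ccontr)
  assume "\<not> inv u m \<le> inv u y"
  then have before: "inv u y < inv u m"
    by simp
  define z where "z = Min (u ` {1..inv u y})"
  have iy: "inv u y \<in> {1..n}" "u (inv u y) = y"
    using y permutes_in_image[OF permutes_inv[OF u]] permutes_inverses(1)[OF u] by auto
  have "z \<in> LRM n u"
    unfolding z_def using Min_prefix_in_LRM[OF u iy(1)] .
  moreover have "z \<le> y"
    unfolding z_def using iy by (intro Min_le) (auto simp: image_iff intro: bexI[of _ "inv u y"])
  moreover have "m < z"
  proof -
    have "m < u k" if "k \<in> {1..inv u y}" for k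
    proof (rule ccontr)
      assume "\<not> m < u k"
      moreover have "u k \<noteq> m"
      proof
        assume "u k = m"
        then have "inv u m = k"
          using permutes_inv_eq[OF u] by simp
        with that before show False
          by simp
      qed
      moreover have "k \<in> {1..n}"
        using that iy(1) by auto
      ultimately have "inv u m < inv u (u k)"
        using LRM_before[OF u m] permutes_in_image[OF u] by simp
      with that before show False
        by (simp add: permutes_inverses(2)[OF u])
    qed
    then show ?thesis
      unfolding z_def using iy(1) by (subst Min_gr_iff) auto
  qed
  moreover have "1 \<le> m"
    using m by (auto simp: LRM_def)
  ultimately have "block_index (LRM' n u) m \<noteq> block_index (LRM' n u) y"
    using y by (subst block_index_LRM'_eq_iff) auto
  with same show False
    by simp
qed

lemma LRM_block_leader:
  assumes u: "u permutes {1..n}" and p: "p \<in> {1..n}"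
  obtains p0 where "p0 \<in> {1..n}" "u p0 \<in> LRM n u"
    "block_index (LRM' n u) (u p0) = block_index (LRM' n u) (u p)"
    "\<And>q. q \<in> {1..n} \<Longrightarrow> block_index (LRM' n u) (u q) = block_index (LRM' n u) (u p) \<Longrightarrow> p0 \<le> q \<and> u p0 \<le> u q"
proof -
  have up: "u p \<in> {1..n}"
    using permutes_in_image[OF u] p by simp
  obtain m where m: "m \<in> LRM n u" "m \<le> u p" "block_index (LRM' n u) m = block_index (LRM' n u) (u p)"
    and least: "\<And>y'. y' \<in> {1..n} \<Longrightarrow> block_index (LRM' n u) y' = block_index (LRM' n u) (u p) \<Longrightarrow> m \<le> y'"
    using LRM_block_min[OF u up] by blast
  have "m \<in> {1..n}"
    using m(1) by (simp add: LRM_def)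
  then have p0: "inv u m \<in> {1..n}" "u (inv u m) = m"
    using permutes_in_image[OF permutes_inv[OF u]] permutes_inverses(1)[OF u] by auto
  show ?thesis
  proof (rule that[OF p0(1)])
    show "u (inv u m) \<in> LRM n u" "block_index (LRM' n u) (u (inv u m)) = block_index (LRM' n u) (u p)"
      using p0(2) m by simp_all
    fix q assume q: "q \<in> {1..n}" "block_index (LRM' n u) (u q) = block_index (LRM' n u) (u p)"
    have uq: "u q \<in> {1..n}"
      using permutes_in_image[OF u] q(1) by simp
    then have "inv u m \<le> inv u (u q)"
      using LRM_first_in_block[OF u m(1) uq] least[OF uq q(2)] m(3) q(2) by simp
    then show "inv u m \<le> q \<and> u (inv u m) \<le> u q"
      using least[OF uq q(2)] p0(2) permutes_inverses(2)[OF u] by simp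
  qed
qed

lemma common_LRM_leader:
  assumes u: "u permutes {1..n}" and w: "w permutes {1..n}" and p: "p \<in> {1..n}"
    and same_blocks: "\<And>p q. p \<in> {1..n} \<Longrightarrow> q \<in> {1..n} \<Longrightarrow>
      block_index (LRM' n w) (w p) = block_index (LRM' n w) (w q) \<longleftrightarrow>
      block_index (LRM' n u) (u p) = block_index (LRM' n u) (u q)"
  obtains p0 where "p0 \<in> {1..n}" "u p0 \<in> LRM n u" "w p0 \<in> LRM n w"
    "block_index (LRM' n u) (u p0) = block_index (LRM' n u) (u p)"
    "\<And>q. q \<in> {1..n} \<Longrightarrow> block_index (LRM' n u) (u q) = block_index (LRM' n u) (u p) \<Longrightarrow>
      u p0 \<le> u q \<and> w p0 \<le> w q"
proof -
  obtain a where a: "a \<in> {1..n}" "u a \<in> LRM n u" "block_index (LRM' n u) (u a) = block_index (LRM' n u) (u p)"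
    and a_least: "\<And>q. q \<in> {1..n} \<Longrightarrow> block_index (LRM' n u) (u q) = block_index (LRM' n u) (u p) \<Longrightarrow> a \<le> q \<and> u a \<le> u q"
    using LRM_block_leader[OF u p] by blast
  obtain b where b: "b \<in> {1..n}" "w b \<in> LRM n w" "block_index (LRM' n w) (w b) = block_index (LRM' n w) (w p)"
    and b_least: "\<And>q. q \<in> {1..n} \<Longrightarrow> block_index (LRM' n w) (w q) = block_index (LRM' n w) (w p) \<Longrightarrow> b \<le> q \<and> w b \<le> w q"
    using LRM_block_leader[OF w p] by blast
  have "a = b"
    using a_least[OF b(1)] b_least[OF a(1)] same_blocks[OF a(1) p] same_blocks[OF b(1) p] a(3) b(3) by simp
  then show ?thesis
    using that a b a_least b_least same_blocks p by blast
qed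

lemma LRM_leader_order:
  assumes u: "u permutes {1..n}" and "p0 \<in> {1..n}" "q0 \<in> {1..n}" "u q0 \<in> LRM n u"
    and "block_index (LRM' n u) (u p0) < block_index (LRM' n u) (u q0)"
  shows "q0 < p0"
proof -
  have "u p0 < u q0"
    using block_index_mono[of "u q0" "u p0"] assms(5) by (meson leD le_less_linear)
  then have "inv u (u q0) < inv u (u p0)"
    using LRM_before[OF u assms(4)] permutes_in_image[OF u] assms(2) by simp
  then show ?thesis
    by (simp add: permutes_inverses(2)[OF u])
qed

lemma card_permutes_le:
  assumes v: "v permutes {1..n}" and p: "p \<in> {1..n}"
  shows "card {q \<in> {1..n}. v q \<le> v p} = v p"
proof -
  have "v ` {q \<in> {1..n}. v q \<le> v p} = {1..v p}"
  proof (intro equalityI subsetI)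
    fix y assume "y \<in> {1..v p}"
    moreover have "v p \<in> {1..n}"
      using permutes_in_image[OF v] p by simp
    ultimately have "inv v y \<in> {1..n}" "v (inv v y) = y"
      using permutes_in_image[OF permutes_inv[OF v]] permutes_inverses(1)[OF v] by auto
    with \<open>y \<in> {1..v p}\<close> show "y \<in> v ` {q \<in> {1..n}. v q \<le> v p}"
      by (metis (mono_tags, lifting) atLeastAtMost_iff image_eqI mem_Collect_eq)
  qed (use permutes_in_image[OF v] in auto)
  then show ?thesis
    using card_image[OF permutes_inj_on[OF v]] by (metis card_atLeastAtMost diff_Suc_1)
qed

lemma permutes_eq_if_order_preserving:
  fixes u w :: "nat \<Rightarrow> nat"
  assumes u: "u permutes {1..n}" and w: "w permutes {1..n}"
    and mono: "\<And>p q. p \<in> {1..n} \<Longrightarrow> q \<in> {1..n} \<Longrightarrow> u p < u q \<Longrightarrow> w p < w q"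
  shows "u = w"
proof
  fix p
  show "u p = w p"
  proof (cases "p \<in> {1..n}")
    case True
    have "u q \<le> u p \<longleftrightarrow> w q \<le> w p" if "q \<in> {1..n}" for q
    proof (cases "q = p")
      case False
      then have "u q \<noteq> u p" "w q \<noteq> w p"
        using permutes_inj[OF u] permutes_inj[OF w] by (auto dest: injD)
      show ?thesis
      proof (cases "u q < u p")
        case True
        then show ?thesis
          using mono[OF that \<open>p \<in> {1..n}\<close>] by simp
      next
        case False
        then have "w p < w q"
          using mono[OF \<open>p \<in> {1..n}\<close> that] \<open>u q \<noteq> u p\<close> by simp
        with False \<open>u q \<noteq> u p\<close> show ?thesis
          by simp
      qed
    qed simp
    then have "{q \<in> {1..n}. u q \<le> u p} = {q \<in> {1..n}. w q \<le> w p}"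
      by blast
    then show ?thesis
      using card_permutes_le[OF u True] card_permutes_le[OF w True] by simp
  qed (simp add: permutes_not_in[OF u] permutes_not_in[OF w])
qed

lemma LRM_order_across_blocks:
  fixes u w :: "nat \<Rightarrow> nat"
  assumes u: "u permutes {1..n}" and w: "w permutes {1..n}"
    and same_blocks: "\<And>p q. p \<in> {1..n} \<Longrightarrow> q \<in> {1..n} \<Longrightarrow>
      block_index (LRM' n w) (w p) = block_index (LRM' n w) (w q) \<longleftrightarrow>
      block_index (LRM' n u) (u p) = block_index (LRM' n u) (u q)"
    and pq: "p \<in> {1..n}" "q \<in> {1..n}" "u p < u q"
    and different: "block_index (LRM' n u) (u p) \<noteq> block_index (LRM' n u) (u q)"
  shows "w p < w q"
proof (rule ccontr)
  let ?bu = "block_index (LRM' n u)" and ?bw = "block_index (LRM' n w)"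
  assume "\<not> w p < w q"
  obtain p0 where p0: "p0 \<in> {1..n}" "u p0 \<in> LRM n u" "w p0 \<in> LRM n w" "?bu (u p0) = ?bu (u p)"
    using common_LRM_leader[OF u w pq(1) same_blocks] by blast
  obtain q0 where q0: "q0 \<in> {1..n}" "u q0 \<in> LRM n u" "w q0 \<in> LRM n w" "?bu (u q0) = ?bu (u q)"
    using common_LRM_leader[OF u w pq(2) same_blocks] by blast
  have "?bu (u p) < ?bu (u q)"
    using block_index_mono[of "u p" "u q" "LRM' n u"] pq(3) different by simp
  then have "q0 < p0"
    using LRM_leader_order[OF u p0(1) q0(1,2)] p0(4) q0(4) by simp
  have "?bw (w q) \<le> ?bw (w p)"
    using \<open>\<not> w p < w q\<close> by (simp add: block_index_mono)
  moreover have "?bw (w p) \<noteq> ?bw (w q)"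
    using same_blocks[OF pq(1,2)] different by simp
  ultimately have "?bw (w q0) < ?bw (w p0)"
    using same_blocks[OF p0(1) pq(1)] same_blocks[OF q0(1) pq(2)] p0(4) q0(4) by simp
  then have "p0 < q0"
    using LRM_leader_order[OF w q0(1) p0(1,3)] by simp
  with \<open>q0 < p0\<close> show False
    by simp
qed

lemma admissible_LRM_same_block:
  fixes u w :: "nat \<Rightarrow> nat"
  assumes u: "u permutes {1..n}" and SetC: "SetC \<beta> = LRM' n w"
    and same_blocks: "\<And>p q. p \<in> {1..n} \<Longrightarrow> q \<in> {1..n} \<Longrightarrow>
      block_index (LRM' n w) (w p) = block_index (LRM' n w) (w q) \<longleftrightarrow>
      block_index (LRM' n u) (u p) = block_index (LRM' n u) (u q)"
    and adm: "admissible n \<beta> (LRM' n u) (w \<circ> inv u) L"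
    and pq: "p \<in> {1..n}" "q \<in> {1..n}" "u p < u q"
      "block_index (LRM' n u) (u p) = block_index (LRM' n u) (u q)"
  shows "bracket_before L (w p) (w q)"
proof -
  have "comp_before \<beta> L ((w \<circ> inv u) (u p)) ((w \<circ> inv u) (u q))"
    using adm pq permutes_in_image[OF u] unfolding admissible_def by blast
  then show ?thesis
    using same_blocks[OF pq(1,2)] pq(4) SetC by (simp add: comp_before_def permutes_inverses(2)[OF u])
qed

text \<open>The common leader of a position class carries the minimum of its block, which is not in \<open>L\<close>;
  admissibility puts every other letter of the class after it, which \<open>bracket_before\<close> only allows
  for letters outside \<open>L\<close>.\<close>
lemma admissible_LRM_empty:
  fixes u w :: "nat \<Rightarrow> nat"
  assumes u: "u permutes {1..n}" and w: "w permutes {1..n}"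
    and pos: "0 \<notin> set \<beta>" and n: "sum_list \<beta> = n" and SetC: "SetC \<beta> = LRM' n w"
    and L: "L \<subseteq> part_tails \<beta>"
    and same_blocks: "\<And>p q. p \<in> {1..n} \<Longrightarrow> q \<in> {1..n} \<Longrightarrow>
      block_index (LRM' n w) (w p) = block_index (LRM' n w) (w q) \<longleftrightarrow>
      block_index (LRM' n u) (u p) = block_index (LRM' n u) (u q)"
    and adm: "admissible n \<beta> (LRM' n u) (w \<circ> inv u) L"
  shows "L = {}"
proof -
  let ?bu = "block_index (LRM' n u)" and ?bw = "block_index (LRM' n w)"
  have not_in_L: "w q \<notin> L" if q: "q \<in> {1..n}" for q
  proof -
    obtain p0 where p0: "p0 \<in> {1..n}" "?bu (u p0) = ?bu (u q)"
      and least: "\<And>q'. q' \<in> {1..n} \<Longrightarrow> ?bu (u q') = ?bu (u q) \<Longrightarrow> u p0 \<le> u q' \<and> w p0 \<le> w q'"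
      using common_LRM_leader[OF u w q same_blocks] by blast
    have "w p0 \<notin> part_tails \<beta>"
    proof
      assume "w p0 \<in> part_tails \<beta>"
      then obtain y where y: "y \<in> {1..n}" "y < w p0" "?bw y = ?bw (w p0)"
        using mem_part_tails_iff[OF pos] n SetC by auto
      then have "inv w y \<in> {1..n}" "w (inv w y) = y"
        using permutes_in_image[OF permutes_inv[OF w]] permutes_inverses(1)[OF w] by auto
      then have "w p0 \<le> y"
        using least[of "inv w y"] same_blocks[OF _ p0(1), of "inv w y"] y(3) p0(2) by auto
      with y(2) show False
        by simp
    qed
    then have "w p0 \<notin> L"
      using L by blast
    moreover have "bracket_before L (w p0) (w q)" if "q \<noteq> p0"
    proof -
      have "u p0 \<noteq> u q"
        using that permutes_inj[OF u] by (auto dest: injD)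
      then show ?thesis
        using admissible_LRM_same_block[OF u SetC same_blocks adm p0(1) q] least[OF q] p0(2) by simp
    qed
    ultimately show ?thesis
      by (cases "q = p0") (auto simp: bracket_before_def)
  qed
  have "L \<subseteq> w ` {1..n}"
    using L mem_part_tails_iff[OF pos] n permutes_image[OF w] by blast
  with not_in_L show ?thesis
    by blast
qed

lemma eq_if_admissible_LRM:
  fixes u w :: "nat \<Rightarrow> nat"
  assumes u: "u permutes {1..n}" and w: "w permutes {1..n}"
    and pos: "0 \<notin> set \<beta>" and n: "sum_list \<beta> = n" and SetC: "SetC \<beta> = LRM' n w"
    and L: "L \<subseteq> part_tails \<beta>"
    and same_blocks: "\<And>p q. p \<in> {1..n} \<Longrightarrow> q \<in> {1..n} \<Longrightarrow>
      block_index (LRM' n w) (w p) = block_index (LRM' n w) (w q) \<longleftrightarrow>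
      block_index (LRM' n u) (u p) = block_index (LRM' n u) (u q)"
    and adm: "admissible n \<beta> (LRM' n u) (w \<circ> inv u) L"
  shows "u = w"
proof (rule permutes_eq_if_order_preserving[OF u w])
  fix p q assume pq: "p \<in> {1..n}" "q \<in> {1..n}" "u p < u q"
  have "L = {}"
    by (rule admissible_LRM_empty[OF assms])
  show "w p < w q"
  proof (cases "block_index (LRM' n u) (u p) = block_index (LRM' n u) (u q)")
    case True
    then show ?thesis
      using admissible_LRM_same_block[OF u SetC same_blocks adm pq True] \<open>L = {}\<close>
      by (simp add: bracket_before_def)
  qed (rule LRM_order_across_blocks[OF u w same_blocks pq])
qed

lemma LRM_blocks_correspond:
  fixes w u :: "nat \<Rightarrow> nat"
  assumes w: "w permutes {1..n}" and u: "u permutes {1..n}"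
    and not_less: "\<not> pi_less (sortdec (cLRM' n w)) (sortdec (cLRM' n u))"
    and refines: "\<And>a b. a \<in> {1..n} \<Longrightarrow> b \<in> {1..n} \<Longrightarrow>
      block_index (LRM' n w) a = block_index (LRM' n w) b \<Longrightarrow>
      block_index (LRM' n u) (u (inv w a)) = block_index (LRM' n u) (u (inv w b))"
    and pq: "p \<in> {1..n}" "q \<in> {1..n}"
  shows "block_index (LRM' n w) (w p) = block_index (LRM' n w) (w q) \<longleftrightarrow>
    block_index (LRM' n u) (u p) = block_index (LRM' n u) (u q)"
proof -
  have \<beta>: "0 \<notin> set (cLRM' n w)" "sum_list (cLRM' n w) = n" "SetC (cLRM' n w) = LRM' n w"
    and \<gamma>: "0 \<notin> set (cLRM' n u)" "sum_list (cLRM' n u) = n" "SetC (cLRM' n u) = LRM' n u"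
    using cLRM'_composition by auto
  have h: "u \<circ> inv w permutes {1..n}"
    using u w by (simp add: permutes_compose permutes_inv)
  have "w p \<in> {1..n}" "w q \<in> {1..n}"
    using pq permutes_in_image[OF w] by auto
  moreover have "block_index (SetC (cLRM' n u)) ((u \<circ> inv w) a) = block_index (SetC (cLRM' n u)) ((u \<circ> inv w) b)"
    if "a \<in> {1..n}" "b \<in> {1..n}" "block_index (SetC (cLRM' n w)) a = block_index (SetC (cLRM' n w)) b" for a b
    using refines[OF that[unfolded \<beta>(3)]] unfolding \<gamma>(3) comp_apply .
  ultimately have "block_index (SetC (cLRM' n w)) (w p) = block_index (SetC (cLRM' n w)) (w q) \<longleftrightarrow>
      block_index (SetC (cLRM' n u)) ((u \<circ> inv w) (w p)) = block_index (SetC (cLRM' n u)) ((u \<circ> inv w) (w q))"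
    using blocks_correspond_if_not_pi_less[OF \<beta>(1,2) \<gamma>(1,2) h _ not_less] by blast
  then show ?thesis
    by (simp add: \<beta>(3) \<gamma>(3) permutes_inverses(2)[OF w])
qed

lemma coeff_off_diagonal:
  fixes w u :: "nat \<Rightarrow> nat"
  assumes w: "w permutes {1..n}" and u: "u permutes {1..n}" and "u \<noteq> w"
    and not_less: "\<not> pi_less (sortdec (cLRM' n w)) (sortdec (cLRM' n u))"
  shows "actBu n (Vcomp (cLRM' n w) :: 'k::comm_ring_1 ncpoly) (SetC (cLRM' n u)) u (underline n w) = 0"
proof -
  define \<beta> where "\<beta> = cLRM' n w"
  define g where "g = w \<circ> inv u"
  have \<beta>: "0 \<notin> set \<beta>" "sum_list \<beta> = n" "SetC \<beta> = LRM' n w"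
    using cLRM'_composition by (simp_all add: \<beta>_def)
  have g: "g permutes {1..n}"
    unfolding g_def using u w by (simp add: permutes_compose permutes_inv)
  have "inv g = inv (inv u) \<circ> inv w"
    unfolding g_def using permutes_bij[OF w] permutes_bij[OF permutes_inv[OF u]] by (rule o_inv_distrib)
  then have inv_g: "inv g = u \<circ> inv w"
    using permutes_inv_inv[OF u] by simp
  have "(\<Sum>L\<in>Pow (part_tails \<beta>). if admissible n \<beta> (LRM' n u) g L then (-1) ^ card L else (0::'k)) = 0"
  proof (cases "\<exists>a\<in>{1..n}. \<exists>b\<in>{1..n}. block_index (SetC \<beta>) a = block_index (SetC \<beta>) b \<and>
      block_index (LRM' n u) (inv g a) \<noteq> block_index (LRM' n u) (inv g b)")
    case True
    then obtain a b where "a \<in> {1..n}" "b \<in> {1..n}" "block_index (SetC \<beta>) a = block_index (SetC \<beta>) b"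
      "block_index (LRM' n u) (inv g a) \<noteq> block_index (LRM' n u) (inv g b)"
      by blast
    then show ?thesis
      by (rule sum_admissible_eq_0_if_split[OF \<beta>(1,2) g])
  next
    case False
    have refines: "block_index (LRM' n u) (u (inv w a)) = block_index (LRM' n u) (u (inv w b))"
      if "a \<in> {1..n}" "b \<in> {1..n}" "block_index (LRM' n w) a = block_index (LRM' n w) b" for a b
      using False that unfolding \<beta>(3) inv_g comp_apply by blast
    have "block_index (LRM' n w) (w p) = block_index (LRM' n w) (w q) \<longleftrightarrow>
        block_index (LRM' n u) (u p) = block_index (LRM' n u) (u q)"
      if "p \<in> {1..n}" "q \<in> {1..n}" for p q
      by (rule LRM_blocks_correspond[OF w u not_less refines that])
    then have "\<not> admissible n \<beta> (LRM' n u) g L" if "L \<subseteq> part_tails \<beta>" for L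
      using eq_if_admissible_LRM[OF u w \<beta> that] \<open>u \<noteq> w\<close> by (auto simp: g_def)
    then show ?thesis
      by (intro sum.neutral) auto
  qed
  moreover have "actBu n (Vcomp \<beta> :: 'k ncpoly) (LRM' n u) u (underline n w) =
      (\<Sum>L\<in>Pow (part_tails \<beta>). if admissible n \<beta> (LRM' n u) g L then (-1) ^ card L else 0)"
    unfolding g_def by (rule actBu_underline_eq_sum_admissible[OF \<beta>(1,2) w u])
  moreover have "SetC (cLRM' n u) = LRM' n u"
    using cLRM'_composition by blast
  ultimately show ?thesis
    by (simp add: \<beta>_def)
qed

theorem lemma5p3:
  fixes n :: nat and w u :: "nat \<Rightarrow> nat"
  assumes "w permutes {1..n}" and "u permutes {1..n}"
  defines "\<beta> \<equiv> cLRM' n w" and "\<gamma> \<equiv> cLRM' n u"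
  shows "actBu n (Vcomp \<beta> :: 'k::comm_ring_1 ncpoly) (SetC \<beta>) w (underline n w) = 1 \<and>
         (u \<noteq> w \<longrightarrow> \<not> pi_less (sortdec \<beta>) (sortdec \<gamma>) \<longrightarrow>
         actBu n (Vcomp \<beta> :: 'k::comm_ring_1 ncpoly) (SetC \<gamma>) u (underline n w) = 0)"
proof -
  have "0 \<notin> set \<beta>" "sum_list \<beta> = n"
    using cLRM'_composition by (simp_all add: \<beta>_def)
  with assms(1) have "actBu n (Vcomp \<beta> :: 'k ncpoly) (SetC \<beta>) w (underline n w) = 1"
    by (rule coeff_diagonal[rotated 2])
  moreover have "u \<noteq> w \<longrightarrow> \<not> pi_less (sortdec \<beta>) (sortdec \<gamma>) \<longrightarrow>
      actBu n (Vcomp \<beta> :: 'k ncpoly) (SetC \<gamma>) u (underline n w) = 0"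
    unfolding \<beta>_def \<gamma>_def using coeff_off_diagonal[OF assms(1,2)] by blast
  ultimately show ?thesis ..
qed

end
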